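(* Let $g\ge1$ and let $\ell$ be a prime with $\ell\nmid 2g$. For any integer $t$ and any real $z>0$: (i) the sets $\mathcal{C}^{ss}(\ell,t)$ and $\mathcal{C}^{ss}(\ell,|t|\le z)$ are non-empty and stable under conjugation by elements of $\operatorname{GSp}_{2g}(\mathbb{F}_\ell)$; (ii) the sets $\mathcal{C}_B(\ell,t)$ and $\mathcal{C}_B(\ell,|t|\le z)$ are non-empty and stable under conjugation by elements of $B_{2g}(\mathbb{F}_\ell)$; (iii) every element of $\mathcal{C}^{ss}(\ell,t)\cup\mathcal{C}^{ss}(\ell,|t|\le z)$ is conjugate over $\operatorname{GSp}_{2g}(\mathbb{F}_\ell)$ to some element of $B_{2g}(\mathbb{F}_\ell)$; (iv) $U_{2g}(\mathbb{F}_\ell)\,\mathcal{C}_B(\ell,t)\subseteq\mathcal{C}_B(\ell,t)$, $U'_{2g}(\mathbb{F}_\ell)\,\mathcal{C}_B(\ell,0)\subseteq\mathcal{C}_B(\ell,0)$, and $U_{2g}(\mathbb{F}_\ell)\,\mathcal{C}_B(\ell,|t|\le z)\subseteq\mathcal{C}_B(\ell,|t|\le z)$.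
   Context: $\operatorname{GSp}_{2g}(\mathbb{F}_\ell)=\{M\in\operatorname{GL}_{2g}(\mathbb{F}_\ell):M^tJ_{2g}M=\mu J_{2g},\mu\in\mathbb{F}_\ell^\times\}$, $J_{2g}=\begin{pmatrix}0&I_g\\-I_g&0\end{pmatrix}$; $\mu$ is the multiplicator of $M$. For such $M$ the characteristic polynomial factors over $\overline{\mathbb{F}}_\ell$ as $\prod_{i=1}^g(X-\lambda_i(M))(X-\mu\lambda_i(M)^{-1})$ for some $\lambda_1(M),\dots,\lambda_g(M)\in\overline{\mathbb{F}}_\ell$. $M$ is semisimple if its minimal polynomial has distinct roots in $\overline{\mathbb{F}}_\ell$. Define $\mathcal{C}(\ell,t)=\{M\in\operatorname{GSp}_{2g}(\mathbb{F}_\ell):\lambda_i(M)\in\mathbb{F}_\ell^\times\ (1\le i\le g),\ \operatorname{tr}M=-t\bmod\ell\}$, $\mathcal{C}^{ss}(\ell,t)$ its subset of semisimple matrices, $\mathcal{C}^{ss}(\ell,|t|\le z)=\bigcup_{t\in\mathbb{Z},|t|\le z}\mathcal{C}^{ss}(\ell,t)$, $\mathcal{C}(\ell,|t|\le z)=\bigcup_{|t|\le z}\mathcal{C}(\ell,t)$, $\mathcal{C}_B(\ell,t)=\mathcal{C}(\ell,t)\cap B_{2g}(\mathbb{F}_\ell)$, $\mathcal{C}_B(\ell,|t|\le z)=\mathcal{C}(\ell,|t|\le z)\cap B_{2g}(\mathbb{F}_\ell)$. Groups: $\mathcal{B}_g$ = invertible upper triangular $g\times g$ matrices over $\mathbb{F}_\ell$,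 $\mathcal{U}_g$ = those with diagonal entries $1$, $\mathcal{U}'_g$ = those with all diagonal entries equal to a common $\lambda\in\mathbb{F}_\ell^\times$ ($d(A):=\lambda$); $B_{2g}(\mathbb{F}_\ell)=\{\begin{pmatrix}A&\mu^{-1}AS\\0&\mu(A^t)^{-1}\end{pmatrix}:A\in\mathcal{B}_g,\mu\in\mathbb{F}_\ell^\times,S\text{ symmetric}\}$, $U_{2g}(\mathbb{F}_\ell)=\{\begin{pmatrix}A&AS\\0&(A^t)^{-1}\end{pmatrix}:A\in\mathcal{U}_g,S\text{ symmetric}\}$, $U'_{2g}(\mathbb{F}_\ell)=\{\begin{pmatrix}A&\mu^{-1}AS\\0&\mu(A^t)^{-1}\end{pmatrix}:A\in\mathcal{U}'_g,\mu=d(A)^2,S\text{ symmetric}\}$. *)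

theory Defs
  imports "Jordan_Normal_Form.Char_Poly" "HOL-Algebra.Algebraic_Closure_Type"
begin

definition Jmat :: "nat \<Rightarrow> 'a::field mat" where
  "Jmat g = four_block_mat (0\<^sub>m g g) (1\<^sub>m g) (- 1\<^sub>m g) (0\<^sub>m g g)"

definition GSp :: "nat \<Rightarrow> 'a::field mat set" where
  "GSp g = {M \<in> carrier_mat (2*g) (2*g). invertible_mat M \<and>
      (\<exists>\<mu>. \<mu> \<noteq> 0 \<and> transpose_mat M * Jmat g * M = \<mu> \<cdot>\<^sub>m Jmat g)}"

text \<open>The multiplicator of M (unique for g >= 1).\<close>
definition multiplicator :: "nat \<Rightarrow> 'a::field mat \<Rightarrow> 'a" where
  "multiplicator g M = (THE \<mu>. transpose_mat M * Jmat g * M = \<mu> \<cdot>\<^sub>m Jmat g)"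

definition mat_trace :: "'a::comm_ring_1 mat \<Rightarrow> 'a" where
  "mat_trace M = (\<Sum>i<dim_row M. M $$ (i, i))"

definition poly_mat_eval :: "'a::comm_ring_1 poly \<Rightarrow> 'a mat \<Rightarrow> 'a mat" where
  "poly_mat_eval p M = mat (dim_row M) (dim_row M)
     (\<lambda>(i, j). \<Sum>k\<le>Polynomial.degree p. Polynomial.coeff p k * (M ^\<^sub>m k) $$ (i, j))"

definition is_minimal_poly :: "'a::field mat \<Rightarrow> 'a poly \<Rightarrow> bool" where
  "is_minimal_poly M p \<longleftrightarrow> Polynomial.lead_coeff p = 1 \<and> poly_mat_eval p M = 0\<^sub>m (dim_row M) (dim_row M) \<and>
     (\<forall>q. q \<noteq> 0 \<and> poly_mat_eval q M = 0\<^sub>m (dim_row M) (dim_row M) \<longrightarrow> Polynomial.degree p \<le> Polynomial.degree q)"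

definition semisimple :: "'a::field mat \<Rightarrow> bool" where
  "semisimple M \<longleftrightarrow> (\<exists>p. is_minimal_poly M p \<and> rsquarefree (map_poly to_ac p))"

definition eigen_split :: "nat \<Rightarrow> 'a::field mat \<Rightarrow> bool" where
  "eigen_split g M \<longleftrightarrow> (\<exists>lam :: nat \<Rightarrow> 'a alg_closure.
      map_poly to_ac (char_poly M) =
        (\<Prod>i<g. [:- lam i, 1:] * [:- (to_ac (multiplicator g M) * inverse (lam i)), 1:]) \<and>
      (\<forall>i<g. lam i \<in> to_ac ` (UNIV - {0})))"

definition Cset :: "nat \<Rightarrow> int \<Rightarrow> 'a::field mat set" where
  "Cset g t = {M \<in> GSp g. eigen_split g M \<and> mat_trace M = - of_int t}"

definition Css :: "nat \<Rightarrow> int \<Rightarrow> 'a::field mat set" where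
  "Css g t = {M \<in> Cset g t. semisimple M}"

definition Css_le :: "nat \<Rightarrow> real \<Rightarrow> 'a::field mat set" where
  "Css_le g z = (\<Union>t \<in> {t::int. \<bar>real_of_int t\<bar> \<le> z}. Css g t)"

definition Cset_le :: "nat \<Rightarrow> real \<Rightarrow> 'a::field mat set" where
  "Cset_le g z = (\<Union>t \<in> {t::int. \<bar>real_of_int t\<bar> \<le> z}. Cset g t)"

definition is_inverse_mat :: "nat \<Rightarrow> 'a::field mat \<Rightarrow> 'a mat \<Rightarrow> bool" where
  "is_inverse_mat n A B \<longleftrightarrow> A \<in> carrier_mat n n \<and> B \<in> carrier_mat n n \<and>
      A * B = 1\<^sub>m n \<and> B * A = 1\<^sub>m n"

text \<open>The block matrix [[A, mu^{-1} A S], [0, mu (A^t)^{-1}]], Ai being the inverse of A.\<close>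
definition borel_block :: "nat \<Rightarrow> 'a::field mat \<Rightarrow> 'a mat \<Rightarrow> 'a \<Rightarrow> 'a mat \<Rightarrow> 'a mat" where
  "borel_block g A Ai \<mu> S = four_block_mat A (inverse \<mu> \<cdot>\<^sub>m (A * S)) (0\<^sub>m g g) (\<mu> \<cdot>\<^sub>m transpose_mat Ai)"

definition Borel_g :: "nat \<Rightarrow> 'a::field mat set" where
  "Borel_g g = {A \<in> carrier_mat g g. upper_triangular A \<and> invertible_mat A}"

definition Unip_g :: "nat \<Rightarrow> 'a::field mat set" where
  "Unip_g g = {A \<in> Borel_g g. \<forall>i<g. A $$ (i, i) = 1}"

definition Unip'_g :: "nat \<Rightarrow> 'a::field mat set" where
  "Unip'_g g = {A \<in> Borel_g g. \<exists>c. c \<noteq> 0 \<and> (\<forall>i<g. A $$ (i, i) = c)}"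

text \<open>d(A): the common diagonal entry.\<close>
definition dA :: "'a::field mat \<Rightarrow> 'a" where
  "dA A = A $$ (0, 0)"

definition B2g :: "nat \<Rightarrow> 'a::field mat set" where
  "B2g g = {borel_block g A Ai \<mu> S | A Ai \<mu> S.
     A \<in> Borel_g g \<and> is_inverse_mat g A Ai \<and> \<mu> \<noteq> 0 \<and>
     S \<in> carrier_mat g g \<and> transpose_mat S = S}"

definition U2g :: "nat \<Rightarrow> 'a::field mat set" where
  "U2g g = {borel_block g A Ai 1 S | A Ai S.
     A \<in> Unip_g g \<and> is_inverse_mat g A Ai \<and>
     S \<in> carrier_mat g g \<and> transpose_mat S = S}"

definition U'2g :: "nat \<Rightarrow> 'a::field mat set" where
  "U'2g g = {borel_block g A Ai ((dA A)^2) S | A Ai S.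
     A \<in> Unip'_g g \<and> is_inverse_mat g A Ai \<and>
     S \<in> carrier_mat g g \<and> transpose_mat S = S}"

definition CB :: "nat \<Rightarrow> int \<Rightarrow> 'a::field mat set" where
  "CB g t = Cset g t \<inter> B2g g"

definition CB_le :: "nat \<Rightarrow> real \<Rightarrow> 'a::field mat set" where
  "CB_le g z = Cset_le g z \<inter> B2g g"

definition conj_stable :: "nat \<Rightarrow> 'a::field mat set \<Rightarrow> 'a mat set \<Rightarrow> bool" where
  "conj_stable g Grp Sset \<longleftrightarrow> (\<forall>P \<in> Grp. \<forall>Q. is_inverse_mat (2*g) P Q \<longrightarrow>
      (\<forall>M \<in> Sset. P * M * Q \<in> Sset))"

end

(* Conjugation preserves the multiplicator, the characteristic and minimal polynomials and the
   trace, and B_2g is a group; this gives the stability statements. A diagonal matrix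
   diag(a,...,a,b,...,b) with a, b nonzero and a + b = -t/g (possible since l does not divide 2g)
   lies in all the sets considered.

   In the basis order e_1,...,e_g,f_g,...,f_1 the group B_2g consists exactly of the upper triangular
   similitudes. If all eigenvalues of M lie in F_l, a product of two symplectic transvections moves
   an eigenvector to e_1; the conjugated matrix then fixes the line of e_1 and stabilises its
   symplectic orthogonal, so it induces a similitude of the complement of the hyperbolic pair
   (e_1, f_1), and induction on g triangularizes M.

   Elements of U_2g and U'_2g are Borel elements with constant diagonal (1, resp. d(A)), and the
   diagonal of a product of Borel elements is the product of the diagonals, so left multiplication
   keeps the trace (resp. scales it, which is harmless for trace 0). *)

theory Submission
  imports Defs "HOL-Number_Theory.Residues"
begin

section \<open>The standard symplectic form\<close>

definition sympl_partner :: "nat \<Rightarrow> nat \<Rightarrow> nat" where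
  "sympl_partner g i = (if i < g then i + g else i - g)"

lemma Jmat_carrier [simp]: "Jmat g \<in> carrier_mat (2*g) (2*g)"
  unfolding Jmat_def carrier_mat_def by (simp add: mult_2)

lemma Jmat_dim [simp]: "dim_row (Jmat g) = 2*g" "dim_col (Jmat g) = 2*g"
  unfolding Jmat_def by (simp_all add: mult_2)

lemma Jmat_index:
  "i < 2*g \<Longrightarrow> k < 2*g \<Longrightarrow> (Jmat g :: 'a::field mat) $$ (i,k) =
     (if k = sympl_partner g i then (if i < g then 1 else -1) else 0)"
  unfolding Jmat_def sympl_partner_def by (simp add: mult_2)

lemma Jmat_mult_index:
  assumes W: "W \<in> carrier_mat (2*g) m" and i: "i < 2*g" and j: "j < m"
  shows "(Jmat g * W :: 'a::field mat) $$ (i,j) = (if i < g then W $$ (i+g, j) else - W $$ (i-g, j))"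
proof -
  have "(Jmat g * W) $$ (i,j) = (\<Sum>k\<in>{0..<2*g}. Jmat g $$ (i,k) * W $$ (k,j))"
    using W i j by (simp add: scalar_prod_def)
  also have "\<dots> = (\<Sum>k\<in>{0..<2*g}. if k = sympl_partner g i then (if i < g then 1 else -1) * W $$ (k,j) else 0)"
    using i by (intro sum.cong) (auto simp: Jmat_index)
  also have "\<dots> = (if i < g then 1 else -1) * W $$ (sympl_partner g i, j)"
    using i by (auto simp: sympl_partner_def)
  finally show ?thesis by (simp add: sympl_partner_def)
qed

lemma Jmat_squared: "(Jmat g * Jmat g :: 'a::field mat) = - 1\<^sub>m (2*g)"
proof (rule eq_matI)
  fix i j assume "i < dim_row (- 1\<^sub>m (2*g) :: 'a mat)" "j < dim_col (- 1\<^sub>m (2*g) :: 'a mat)"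
  then have ij: "i < 2*g" "j < 2*g" by auto
  show "(Jmat g * Jmat g :: 'a mat) $$ (i,j) = (- 1\<^sub>m (2*g) :: 'a mat) $$ (i,j)"
    using ij by (subst Jmat_mult_index[of _ g "2*g"]) (auto simp: Jmat_index sympl_partner_def)
qed simp_all

lemma Jmat_four_block: "Jmat g = four_block_mat (0\<^sub>m g g) (1\<^sub>m g) (- 1\<^sub>m g) (0\<^sub>m g g)"
  by (simp add: Jmat_def)

definition sform :: "nat \<Rightarrow> 'a::comm_ring_1 vec \<Rightarrow> 'a vec \<Rightarrow> 'a" where
  "sform g x y = (\<Sum>k<g. x $ k * y $ (k+g) - x $ (k+g) * y $ k)"

lemma gram_Jmat_index:
  assumes V: "V \<in> carrier_mat (2*g) n" and W: "W \<in> carrier_mat (2*g) m" and i: "i < n" and j: "j < m"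
  shows "(transpose_mat V * Jmat g * W :: 'a::field mat) $$ (i,j) = sform g (col V i) (col W j)"
proof -
  have "transpose_mat V * Jmat g * W = transpose_mat V * (Jmat g * W)"
    using V W by (meson Jmat_carrier assoc_mult_mat transpose_carrier_mat)
  then have "(transpose_mat V * Jmat g * W) $$ (i,j) = (\<Sum>k\<in>{0..<2*g}. V $$ (k,i) * (Jmat g * W) $$ (k,j))"
    using V W i j by (simp add: scalar_prod_def)
  also have "\<dots> = (\<Sum>k\<in>{0..<2*g}. V $$ (k,i) * (if k < g then W $$ (k+g, j) else - W $$ (k-g, j)))"
    using W j by (intro sum.cong) (auto simp del: index_mult_mat simp: Jmat_mult_index)
  also have "\<dots> = (\<Sum>k\<in>{0..<g}. V $$ (k,i) * W $$ (k+g, j)) + (\<Sum>k\<in>{g..<2*g}. V $$ (k,i) * (- W $$ (k-g, j)))"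
    by (simp add: sum.atLeastLessThan_concat[of 0 g "2*g", symmetric])
  also have "(\<Sum>k\<in>{g..<2*g}. V $$ (k,i) * (- W $$ (k-g, j))) = (\<Sum>k\<in>{0..<g}. V $$ (k+g,i) * (- W $$ (k, j)))"
    using sum.shift_bounds_nat_ivl[of "\<lambda>k. V $$ (k,i) * (- W $$ (k-g, j))" 0 g g] by (simp add: mult_2)
  finally show ?thesis
    using V W i j unfolding sform_def by (simp add: atLeast0LessThan sum_negf flip: sum_subtractf)
qed

lemma sform_antisym: "sform g x y = - sform g y x"
  unfolding sform_def sum_negf[symmetric] by (rule sum.cong) (simp_all add: algebra_simps)

lemma sform_self [simp]: "sform g x x = 0"
  unfolding sform_def by (rule sum.neutral) (simp add: algebra_simps)

lemma sform_zero_left: "sform h (0\<^sub>v (2*h)) y = (0::'a::field)"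
  unfolding sform_def by (rule sum.neutral) auto

lemma sform_zero_right: "sform h x (0\<^sub>v (2*h)) = (0::'a::field)"
  unfolding sform_def by (rule sum.neutral) auto

lemma sform_add_smult_left:
  assumes "x \<in> carrier_vec (2*g)" "y \<in> carrier_vec (2*g)"
  shows "sform g (x + a \<cdot>\<^sub>v y) z = sform g x z + a * sform g y (z :: 'a::comm_ring_1 vec)"
  unfolding sform_def using assms by (simp add: sum_distrib_left sum.distrib[symmetric] algebra_simps)

lemma sform_add_smult_right:
  assumes "x \<in> carrier_vec (2*g)" "y \<in> carrier_vec (2*g)"
  shows "sform g z (x + a \<cdot>\<^sub>v y) = sform g z x + a * sform g z (y :: 'a::comm_ring_1 vec)"
  using sform_add_smult_left[OF assms, of a z] sform_antisym[of g z]
  by (metis minus_add_distrib mult_minus_right)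

lemma sform_smult_left:
  "x \<in> carrier_vec (2*g) \<Longrightarrow> sform g (a \<cdot>\<^sub>v x) y = a * sform g x (y :: 'a::comm_ring_1 vec)"
  unfolding sform_def by (simp add: sum_distrib_left algebra_simps)

lemma sform_unit_vec_right:
  assumes "j < 2*g"
  shows "sform g u (unit_vec (2*g) j) = (if j < g then - u $ (j+g) else u $ (j-g))"
proof (cases "j < g")
  case True
  have "sform g u (unit_vec (2*g) j) = (\<Sum>k\<in>{0..<g}. if k = j then - u $ (k+g) else 0)"
    unfolding sform_def atLeast0LessThan[symmetric] using assms True by (intro sum.cong) auto
  then show ?thesis using True by simp
next
  case False
  have "sform g u (unit_vec (2*g) j) = (\<Sum>k\<in>{0..<g}. if k = j - g then u $ k else 0)"
    unfolding sform_def atLeast0LessThan[symmetric] using assms False by (intro sum.cong) auto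
  then show ?thesis using False assms by simp
qed

lemma sform_unit_vec_unit_vec:
  assumes "i < 2*g" "j < 2*g"
  shows "sform g (unit_vec (2*g) i) (unit_vec (2*g) j) = (Jmat g :: 'a::field mat) $$ (i,j)"
  using assms by (auto simp: sform_unit_vec_right Jmat_index sympl_partner_def)

lemma sform_unit_vec_0_left:
  assumes y: "y \<in> carrier_vec (2*g)" and g: "g \<ge> 1"
  shows "sform g (unit_vec (2*g) 0) y = y $ g"
proof -
  have "sform g (unit_vec (2*g) 0) y = - sform g y (unit_vec (2*g) 0)" by (rule sform_antisym)
  also have "\<dots> = y $ g" using g by (subst sform_unit_vec_right, auto)
  finally show ?thesis .
qed

lemma sform_in_unit_vec_coordinates:
  assumes x: "x \<in> carrier_vec (2*g)"
  shows "(\<Sum>j\<in>{0..<2*g}. sform g u (unit_vec (2*g) j) * x $ j) = sform g u (x :: 'a::comm_ring_1 vec)"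
proof -
  have "(\<Sum>j\<in>{0..<2*g}. sform g u (unit_vec (2*g) j) * x $ j) =
      (\<Sum>j\<in>{0..<g}. - u $ (j+g) * x $ j) + (\<Sum>j\<in>{g..<2*g}. u $ (j-g) * x $ j)"
    by (simp add: sform_unit_vec_right sum.atLeastLessThan_concat[of 0 g "2*g", symmetric] if_distrib
        sum.If_cases)
  also have "(\<Sum>j\<in>{g..<2*g}. u $ (j-g) * x $ j) = (\<Sum>j\<in>{0..<g}. u $ j * x $ (j+g))"
    using sum.shift_bounds_nat_ivl[of "\<lambda>j. u $ (j-g) * x $ j" 0 g g] by (simp add: mult_2)
  finally show ?thesis
    unfolding sform_def
    by (simp add: atLeast0LessThan sum_negf[symmetric] sum.distrib[symmetric] algebra_simps)
qed

section \<open>Similitudes\<close>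

lemma smult_smult_mat [simp]: "(a::'a::comm_ring_1) \<cdot>\<^sub>m (b \<cdot>\<^sub>m A) = (a * b) \<cdot>\<^sub>m A"
  by (rule eq_matI) auto

lemma one_smult_mat [simp]: "(1::'a::comm_ring_1) \<cdot>\<^sub>m A = A"
  by (rule eq_matI) auto

lemma transpose_smult_mat [simp]: "transpose_mat (a \<cdot>\<^sub>m A) = a \<cdot>\<^sub>m transpose_mat A"
  by (rule eq_matI) auto

lemma smult_mult_smult_mat:
  "A \<in> carrier_mat n m \<Longrightarrow> B \<in> carrier_mat m l \<Longrightarrow>
    (a \<cdot>\<^sub>m A) * (b \<cdot>\<^sub>m B) = (a * b) \<cdot>\<^sub>m (A * (B :: 'a::comm_ring_1 mat))"
  by (simp add: mult_smult_distrib mult_smult_assoc_mat[of _ n m _ l])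

lemma transpose_mult_sandwich:
  assumes V: "V \<in> carrier_mat n n" and W: "W \<in> carrier_mat n n" and M: "M \<in> carrier_mat n n"
  shows "transpose_mat (V * W) * M * (V * W) =
    transpose_mat W * (transpose_mat V * M * V) * (W :: 'a::field mat)"
  using V W M by (simp add: transpose_mult[OF V W] assoc_mult_mat[of _ n n _ n _ n])

lemma smult_sandwich:
  assumes A: "A \<in> carrier_mat n n" and B: "B \<in> carrier_mat n n" and C: "C \<in> carrier_mat n n"
  shows "A * (c \<cdot>\<^sub>m B) * C = c \<cdot>\<^sub>m (A * B * (C :: 'a::field mat))"
  using A B C by (simp add: mult_smult_distrib[OF A B] mult_smult_assoc_mat[of _ n n _ n])

lemma is_inverse_mat_sym: "is_inverse_mat n A B \<Longrightarrow> is_inverse_mat n B A"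
  by (auto simp: is_inverse_mat_def)

lemma is_inverse_mat_mult:
  assumes "is_inverse_mat n A A'" "is_inverse_mat n B B'"
  shows "is_inverse_mat n (A * B) (B' * (A' :: 'a::field mat))"
proof -
  have c: "A \<in> carrier_mat n n" "A' \<in> carrier_mat n n" "B \<in> carrier_mat n n" "B' \<in> carrier_mat n n"
    and AA': "A * A' = 1\<^sub>m n" and A'A: "A' * A = 1\<^sub>m n" and BB': "B * B' = 1\<^sub>m n" and B'B: "B' * B = 1\<^sub>m n"
    using assms by (auto simp: is_inverse_mat_def)
  have "A * B * (B' * A') = A * (B * B') * A'" "B' * A' * (A * B) = B' * (A' * A) * B"
    using c by (simp_all add: assoc_mult_mat[of _ n n _ n _ n])
  then show ?thesis using c AA' A'A BB' B'B by (simp add: is_inverse_mat_def)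
qed

definition similitude :: "nat \<Rightarrow> 'a::field \<Rightarrow> 'a mat \<Rightarrow> bool" where
  "similitude g \<mu> V \<longleftrightarrow> V \<in> carrier_mat (2*g) (2*g) \<and> transpose_mat V * Jmat g * V = \<mu> \<cdot>\<^sub>m Jmat g"

lemma similitude_carrier: "similitude g \<mu> V \<Longrightarrow> V \<in> carrier_mat (2*g) (2*g)"
  by (simp add: similitude_def)

lemma similitude_one_mat: "similitude g 1 (1\<^sub>m (2*g))"
  unfolding similitude_def by (auto intro!: eq_matI)

lemma similitude_mult:
  assumes "similitude g \<mu> V" "similitude g \<nu> W"
  shows "similitude g (\<mu> * \<nu>) (V * W)"
proof -
  have V: "V \<in> carrier_mat (2*g) (2*g)" and W: "W \<in> carrier_mat (2*g) (2*g)"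
    and eV: "transpose_mat V * Jmat g * V = \<mu> \<cdot>\<^sub>m Jmat g"
    and eW: "transpose_mat W * Jmat g * W = \<nu> \<cdot>\<^sub>m Jmat g" using assms by (auto simp: similitude_def)
  have "transpose_mat (V * W) * Jmat g * (V * W) = transpose_mat W * (\<mu> \<cdot>\<^sub>m Jmat g) * W"
    using transpose_mult_sandwich[OF V W Jmat_carrier] eV by simp
  also have "\<dots> = (\<mu> * \<nu>) \<cdot>\<^sub>m Jmat g"
    using W by (simp add: smult_sandwich[of _ "2*g"] eW)
  finally show ?thesis using V W by (simp add: similitude_def)
qed

lemma similitude_left_inverse:
  assumes "similitude g \<mu> V" "\<mu> \<noteq> 0"
  shows "((- inverse \<mu>) \<cdot>\<^sub>m (Jmat g * transpose_mat V * Jmat g)) * V = 1\<^sub>m (2*g)"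
proof -
  have V: "V \<in> carrier_mat (2*g) (2*g)"
    and eV: "transpose_mat V * Jmat g * V = \<mu> \<cdot>\<^sub>m Jmat g" using assms by (auto simp: similitude_def)
  have "(Jmat g * transpose_mat V * Jmat g) * V = Jmat g * (transpose_mat V * Jmat g * V)"
    using V by (simp add: assoc_mult_mat[of _ "2*g" "2*g" _ "2*g" _ "2*g"])
  also have "\<dots> = \<mu> \<cdot>\<^sub>m - 1\<^sub>m (2*g)"
    unfolding eV Jmat_squared[symmetric] by (rule mult_smult_distrib) auto
  finally show ?thesis
    using V assms(2) by (subst mult_smult_assoc_mat[of _ "2*g" "2*g"]) (auto intro!: eq_matI)
qed

lemma similitude_is_inverse_mat:
  assumes "similitude g \<mu> V" "\<mu> \<noteq> 0"
  shows "is_inverse_mat (2*g) V ((- inverse \<mu>) \<cdot>\<^sub>m (Jmat g * transpose_mat V * Jmat g))"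
proof -
  let ?W = "(- inverse \<mu>) \<cdot>\<^sub>m (Jmat g * transpose_mat V * Jmat g)"
  have V: "V \<in> carrier_mat (2*g) (2*g)" and W: "?W \<in> carrier_mat (2*g) (2*g)"
    using assms by (auto simp: similitude_def)
  show ?thesis
    using similitude_left_inverse[OF assms] mat_mult_left_right_inverse[OF W V] V W
    by (auto simp: is_inverse_mat_def)
qed

lemma similitude_inverse:
  assumes V: "similitude g \<mu> V" and \<mu>: "\<mu> \<noteq> 0" and inv: "is_inverse_mat (2*g) V W"
  shows "similitude g (inverse \<mu>) W"
proof -
  have Vc: "V \<in> carrier_mat (2*g) (2*g)" and Wc: "W \<in> carrier_mat (2*g) (2*g)"
    and VW: "V * W = 1\<^sub>m (2*g)" and eV: "transpose_mat V * Jmat g * V = \<mu> \<cdot>\<^sub>m Jmat g"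
    using V inv by (auto simp: similitude_def is_inverse_mat_def)
  have "transpose_mat W * Jmat g * W = transpose_mat W * (inverse \<mu> \<cdot>\<^sub>m (transpose_mat V * Jmat g * V)) * W"
    using \<mu> by (simp add: eV)
  also have "\<dots> = inverse \<mu> \<cdot>\<^sub>m (transpose_mat (V * W) * Jmat g * (V * W))"
    using Vc Wc by (subst smult_sandwich[of _ "2*g"]) (auto simp: transpose_mult_sandwich[OF Vc Wc])
  finally have "transpose_mat W * Jmat g * W = inverse \<mu> \<cdot>\<^sub>m Jmat g" by (simp add: VW)
  then show ?thesis using Wc by (simp add: similitude_def)
qed

lemma similitude_invertible:
  assumes "similitude g \<mu> V" "\<mu> \<noteq> 0"
  shows "invertible_mat V"
  using similitude_is_inverse_mat[OF assms]
  unfolding invertible_mat_def inverts_mat_def is_inverse_mat_def by auto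

lemma GSp_iff: "V \<in> GSp g \<longleftrightarrow> (\<exists>\<mu>. \<mu> \<noteq> 0 \<and> similitude g \<mu> V)"
  unfolding GSp_def by (auto simp: similitude_def intro: similitude_invertible)

lemma GSp_carrier: "V \<in> GSp g \<Longrightarrow> V \<in> carrier_mat (2*g) (2*g)"
  unfolding GSp_def by auto

lemma similitude_conj:
  assumes P: "similitude g \<nu> P" "\<nu> \<noteq> 0" and inv: "is_inverse_mat (2*g) P Q" and M: "similitude g \<mu> M"
  shows "similitude g \<mu> (P * M * Q)"
proof -
  have "similitude g (\<nu> * \<mu> * inverse \<nu>) (P * M * Q)"
    by (rule similitude_mult[OF similitude_mult[OF P(1) M] similitude_inverse[OF P inv]])
  then show ?thesis using P(2) by (simp add: field_simps)
qed

lemma multiplicator_eq: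
  assumes "g \<ge> 1" "similitude g \<mu> V"
  shows "multiplicator g V = \<mu>"
  unfolding multiplicator_def
proof (rule the_equality)
  show "transpose_mat V * Jmat g * V = \<mu> \<cdot>\<^sub>m Jmat g" using assms by (simp add: similitude_def)
  fix \<nu> assume "transpose_mat V * Jmat g * V = \<nu> \<cdot>\<^sub>m Jmat g"
  then have "(\<nu> \<cdot>\<^sub>m Jmat g :: 'a mat) $$ (0, g) = (\<mu> \<cdot>\<^sub>m Jmat g) $$ (0, g)"
    using assms by (simp add: similitude_def)
  then show "\<nu> = \<mu>" using assms(1) by (simp add: Jmat_index sympl_partner_def)
qed

lemma four_block_mat_eq_iff:
  assumes "A1 \<in> carrier_mat n n" "A2 \<in> carrier_mat n n" "A3 \<in> carrier_mat n n" "A4 \<in> carrier_mat n n"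
    "B1 \<in> carrier_mat n n" "B2 \<in> carrier_mat n n" "B3 \<in> carrier_mat n n" "B4 \<in> carrier_mat n n"
  shows "four_block_mat A1 A2 A3 A4 = four_block_mat B1 B2 B3 B4 \<longleftrightarrow> A1 = B1 \<and> A2 = B2 \<and> A3 = B3 \<and> A4 = B4"
proof
  assume eq: "four_block_mat A1 A2 A3 A4 = four_block_mat B1 B2 B3 B4"
  have e: "four_block_mat A1 A2 A3 A4 $$ (i,j) = four_block_mat B1 B2 B3 B4 $$ (i,j)" for i j
    by (simp only: eq)
  have "A1 $$ (i,j) = B1 $$ (i,j) \<and> A2 $$ (i,j) = B2 $$ (i,j) \<and> A3 $$ (i,j) = B3 $$ (i,j) \<and>
      A4 $$ (i,j) = B4 $$ (i,j)" if "i < n" "j < n" for i j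
    using that assms e[of i j] e[of i "j+n"] e[of "i+n" j] e[of "i+n" "j+n"] by simp
  then show "A1 = B1 \<and> A2 = B2 \<and> A3 = B3 \<and> A4 = B4"
    using assms by (auto intro!: eq_matI)
qed simp

lemma gram_four_block:
  fixes A B D :: "'a::field mat"
  assumes A: "A \<in> carrier_mat g g" and B: "B \<in> carrier_mat g g" and D: "D \<in> carrier_mat g g"
  shows "transpose_mat (four_block_mat A B (0\<^sub>m g g) D) * Jmat g * four_block_mat A B (0\<^sub>m g g) D =
    four_block_mat (0\<^sub>m g g) (transpose_mat A * D) (- (transpose_mat D * A))
      (transpose_mat B * D - transpose_mat D * B)"
proof -
  let ?V = "four_block_mat A B (0\<^sub>m g g) D"
  have V: "?V \<in> carrier_mat (2*g) (2*g)" using A D by (simp add: mult_2)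
  have JV: "Jmat g * ?V = four_block_mat (0\<^sub>m g g) D (- A) (- B)"
    unfolding Jmat_four_block using A B D
    by (subst mult_four_block_mat[of _ g g _ g _ g]) auto
  have T: "transpose_mat ?V = four_block_mat (transpose_mat A) (0\<^sub>m g g) (transpose_mat B) (transpose_mat D)"
    using A B D by (subst transpose_four_block_mat) auto
  have "transpose_mat ?V * Jmat g * ?V = transpose_mat ?V * (Jmat g * ?V)"
    using V by (simp add: assoc_mult_mat[of _ "2*g" "2*g" _ "2*g" _ "2*g"])
  also have "\<dots> = four_block_mat (transpose_mat A) (0\<^sub>m g g) (transpose_mat B) (transpose_mat D) *
      four_block_mat (0\<^sub>m g g) D (- A) (- B)"
    unfolding T JV ..
  also have "\<dots> = four_block_mat (0\<^sub>m g g) (transpose_mat A * D)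
      (- (transpose_mat D * A)) (transpose_mat B * D - transpose_mat D * B)"
    using A B D by (subst mult_four_block_mat[of _ g g _ g _ g]) (auto simp: minus_add_uminus_mat)
  finally show ?thesis .
qed

lemma minus_mat_eq_0_iff:
  "A \<in> carrier_mat n m \<Longrightarrow> B \<in> carrier_mat n m \<Longrightarrow> A - B = 0\<^sub>m n m \<longleftrightarrow> A = (B :: 'a::ab_group_add mat)"
proof
  assume A: "A \<in> carrier_mat n m" and B: "B \<in> carrier_mat n m" and AB: "A - B = 0\<^sub>m n m"
  have "(A - B) $$ (i,j) = 0" if "i < n" "j < m" for i j using AB that by simp
  then show "A = B" using A B by (intro eq_matI) auto
qed simp

lemma similitude_four_block_iff:
  fixes A B D :: "'a::field mat"
  assumes A: "A \<in> carrier_mat g g" and B: "B \<in> carrier_mat g g" and D: "D \<in> carrier_mat g g"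
  shows "similitude g \<mu> (four_block_mat A B (0\<^sub>m g g) D) \<longleftrightarrow>
    transpose_mat A * D = \<mu> \<cdot>\<^sub>m 1\<^sub>m g \<and> transpose_mat B * D = transpose_mat D * B"
proof -
  have "\<mu> \<cdot>\<^sub>m Jmat g = four_block_mat (0\<^sub>m g g) (\<mu> \<cdot>\<^sub>m 1\<^sub>m g) (- (\<mu> \<cdot>\<^sub>m 1\<^sub>m g)) (0\<^sub>m g g)"
    unfolding Jmat_four_block by (rule eq_matI) auto
  then have "similitude g \<mu> (four_block_mat A B (0\<^sub>m g g) D) \<longleftrightarrow>
      transpose_mat A * D = \<mu> \<cdot>\<^sub>m 1\<^sub>m g \<and> transpose_mat D * A = \<mu> \<cdot>\<^sub>m 1\<^sub>m g \<and>
      transpose_mat B * D - transpose_mat D * B = 0\<^sub>m g g"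
    using A B D by (simp add: similitude_def gram_four_block mult_2, subst four_block_mat_eq_iff[of _ g]) auto
  moreover have "transpose_mat D * A = transpose_mat (transpose_mat A * D)"
    using A D by (simp add: transpose_mult)
  ultimately show ?thesis
    using A B D by (auto simp: minus_mat_eq_0_iff[of _ g g])
qed

section \<open>Triangularity with respect to a ranking of the indices\<close>

definition triangular_wrt :: "(nat \<Rightarrow> nat) \<Rightarrow> 'a::zero mat \<Rightarrow> bool" where
  "triangular_wrt r A \<longleftrightarrow> (\<forall>i<dim_row A. \<forall>j<dim_col A. r j < r i \<longrightarrow> A $$ (i,j) = 0)"

lemma triangular_wrtD:
  "triangular_wrt r A \<Longrightarrow> i < dim_row A \<Longrightarrow> j < dim_col A \<Longrightarrow> r j < r i \<Longrightarrow> A $$ (i,j) = 0"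
  by (simp add: triangular_wrt_def)

lemma triangular_wrt_id_iff:
  "A \<in> carrier_mat n n \<Longrightarrow> triangular_wrt id A \<longleftrightarrow> upper_triangular A"
  unfolding triangular_wrt_def upper_triangular_def by auto

lemma triangular_wrt_mult:
  assumes A: "A \<in> carrier_mat n n" and B: "B \<in> carrier_mat n n"
    and tA: "triangular_wrt r A" and tB: "triangular_wrt r B"
  shows "triangular_wrt r (A * B)"
  unfolding triangular_wrt_def
proof (intro allI impI)
  fix i j assume ij: "i < dim_row (A * B)" "j < dim_col (A * B)" and rji: "r j < r i"
  have "A $$ (i,k) * B $$ (k,j) = 0" if "k < n" for k
    using ij that A B rji triangular_wrtD[OF tA, of i k] triangular_wrtD[OF tB, of k j]
    by (cases "r k < r i") auto
  then show "(A * B) $$ (i,j) = 0"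
    using ij A B by (simp add: scalar_prod_def)
qed

lemma triangular_wrt_mult_index_diag_term:
  assumes A: "A \<in> carrier_mat n n" and B: "B \<in> carrier_mat n n" and r: "inj_on r {..<n}"
    and tA: "triangular_wrt r A" and ij: "i < n" "j < n"
    and above: "\<And>k. k < n \<Longrightarrow> r i < r k \<Longrightarrow> B $$ (k,j) = 0"
  shows "(A * B) $$ (i,j) = A $$ (i,i) * B $$ (i,j)"
proof -
  have "A $$ (i,k) * B $$ (k,j) = 0" if "k < n" "k \<noteq> i" for k
  proof -
    have "r k \<noteq> r i" using that ij inj_onD[OF r, of k i] by auto
    then have "r k < r i \<or> r i < r k" by linarith
    then show ?thesis using that ij above A triangular_wrtD[OF tA, of i k] by auto
  qed
  then have "(\<Sum>k\<in>{0..<n}. A $$ (i,k) * B $$ (k,j)) = A $$ (i,i) * B $$ (i,j)"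
    using ij by (subst sum.mono_neutral_right[where S="{i}"]) auto
  then show ?thesis using A B ij by (simp add: scalar_prod_def)
qed

lemma triangular_wrt_mult_diag:
  assumes A: "A \<in> carrier_mat n n" and B: "B \<in> carrier_mat n n" and r: "inj_on r {..<n}"
    and tA: "triangular_wrt r A" and tB: "triangular_wrt r B" and i: "i < n"
  shows "(A * B) $$ (i,i) = A $$ (i,i) * B $$ (i,i)"
  using triangular_wrtD[OF tB] A B i by (intro triangular_wrt_mult_index_diag_term[OF A B r tA i i]) auto

text \<open>The rows of the inverse are treated in order of decreasing rank: once the rows of higher rank
  are known to be triangular, row i of A * B = 1 reduces to its diagonal term.\<close>
lemma triangular_wrt_inverse:
  fixes A :: "'a::field mat"
  assumes A: "A \<in> carrier_mat n n" and B: "B \<in> carrier_mat n n" and r: "inj_on r {..<n}"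
    and tA: "triangular_wrt r A" and AB: "A * B = 1\<^sub>m n"
  shows "triangular_wrt r B" "\<And>i. i < n \<Longrightarrow> A $$ (i,i) * B $$ (i,i) = 1"
proof -
  let ?m = "Max (r ` {..<n})"
  have row: "A $$ (i,i) * B $$ (i,i) = 1 \<and> (\<forall>j<n. r j < r i \<longrightarrow> B $$ (i,j) = 0)" if "i < n" for i
    using that
  proof (induction "?m - r i" arbitrary: i rule: less_induct)
    case (less i)
    have above: "B $$ (k,j) = 0" if "j < n" "r j \<le> r i" "k < n" "r i < r k" for j k
    proof -
      have "r k \<le> ?m" using that(3) by (intro Max_ge) auto
      then have "?m - r k < ?m - r i" using that(4) by linarith
      then show "B $$ (k,j) = 0" using less.hyps that by auto
    qed
    note diag_term = triangular_wrt_mult_index_diag_term[OF A B r tA less.prems]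
    have ii: "A $$ (i,i) * B $$ (i,i) = 1"
      using diag_term[OF less.prems above[OF less.prems order.refl]] less.prems AB by simp
    have "B $$ (i,j) = 0" if "j < n" "r j < r i" for j
    proof -
      have "A $$ (i,i) * B $$ (i,j) = 0"
        using diag_term[OF that(1) above[OF that(1) less_imp_le[OF that(2)]]] that less.prems AB
        by (auto split: if_splits)
      then show ?thesis using ii by auto
    qed
    then show ?case using ii by blast
  qed
  show "triangular_wrt r B" using row B by (auto simp: triangular_wrt_def)
  show "A $$ (i,i) * B $$ (i,i) = 1" if "i < n" for i using row[OF that] by blast
qed

section \<open>The Borel subgroup\<close>

text \<open>The position of basis vector i in the order e_1,...,e_g,f_g,...,f_1, in which the elements
  of B_2g are upper triangular.\<close>
definition borel_rank :: "nat \<Rightarrow> nat \<Rightarrow> nat" where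
  "borel_rank g i = (if i < g then i else 3*g - 1 - i)"

lemma inj_on_borel_rank: "inj_on (borel_rank g) {..<2*g}"
  by (rule inj_onI) (auto simp: borel_rank_def split: if_splits)

lemma triangular_wrt_borel_rank_four_block:
  assumes A: "A \<in> carrier_mat g g" and B: "B \<in> carrier_mat g g" and C: "C \<in> carrier_mat g g"
    and D: "D \<in> carrier_mat g g"
  shows "triangular_wrt (borel_rank g) (four_block_mat A B C D) \<longleftrightarrow>
    upper_triangular A \<and> C = 0\<^sub>m g g \<and> upper_triangular (transpose_mat D)"
    (is "?T \<longleftrightarrow> _")
proof (intro iffI conjI)
  assume T: ?T
  have z: "four_block_mat A B C D $$ (i,j) = 0"
    if "i < 2*g" "j < 2*g" "borel_rank g j < borel_rank g i" for i j
    using triangular_wrtD[OF T] that A D by (simp add: mult_2)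
  show "upper_triangular A"
    unfolding upper_triangular_def
  proof (intro allI impI)
    fix i j assume "i < dim_row A" "j < i"
    then show "A $$ (i,j) = 0" using z[of i j] A D by (auto simp: borel_rank_def)
  qed
  show "C = 0\<^sub>m g g"
  proof (rule eq_matI)
    fix i j assume "i < dim_row (0\<^sub>m g g :: 'a mat)" "j < dim_col (0\<^sub>m g g :: 'a mat)"
    moreover have "borel_rank g j < borel_rank g (i+g)" if "i < g" "j < g"
      using that by (simp add: borel_rank_def)
    ultimately show "C $$ (i,j) = 0\<^sub>m g g $$ (i,j)"
      using z[of "i+g" j] A C D by auto
  qed (use C in auto)
  show "upper_triangular (transpose_mat D)"
    unfolding upper_triangular_def
  proof (intro allI impI)
    fix i j assume "i < dim_row (transpose_mat D)" "j < i"
    moreover have "borel_rank g (i+g) < borel_rank g (j+g)" if "i < g" "j < i"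
      using that by (simp add: borel_rank_def)
    ultimately show "transpose_mat D $$ (i,j) = 0"
      using z[of "j+g" "i+g"] A D by auto
  qed
next
  assume "upper_triangular A \<and> C = 0\<^sub>m g g \<and> upper_triangular (transpose_mat D)"
  then show ?T
    using A C D unfolding triangular_wrt_def upper_triangular_def
    by (auto simp: borel_rank_def)
qed

lemma borel_block_four_block:
  "borel_block g A Ai \<mu> S = four_block_mat A (inverse \<mu> \<cdot>\<^sub>m (A * S)) (0\<^sub>m g g) (\<mu> \<cdot>\<^sub>m transpose_mat Ai)"
  by (simp add: borel_block_def)

lemma borel_block_similitude:
  fixes A :: "'a::field mat"
  assumes A: "A \<in> carrier_mat g g" and Ai: "Ai \<in> carrier_mat g g" and AiA: "Ai * A = 1\<^sub>m g"
    and S: "S \<in> carrier_mat g g" and sym: "transpose_mat S = S" and \<mu>: "\<mu> \<noteq> 0"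
  shows "similitude g \<mu> (borel_block g A Ai \<mu> S)"
proof -
  have "transpose_mat A * (\<mu> \<cdot>\<^sub>m transpose_mat Ai) = \<mu> \<cdot>\<^sub>m transpose_mat (Ai * A)"
    using A Ai by (simp add: mult_smult_distrib transpose_mult)
  moreover have "transpose_mat (inverse \<mu> \<cdot>\<^sub>m (A * S)) * (\<mu> \<cdot>\<^sub>m transpose_mat Ai) =
      transpose_mat (Ai * A * S)"
  proof -
    have "transpose_mat (Ai * A * S) = transpose_mat S * (transpose_mat A * transpose_mat Ai)"
      using A Ai S by (simp add: transpose_mult[of _ g g _ g])
    then show ?thesis
      using A Ai S \<mu> by (simp add: smult_mult_smult_mat[of _ g g] transpose_mult[OF A S])
  qed
  moreover have "transpose_mat (\<mu> \<cdot>\<^sub>m transpose_mat Ai) * (inverse \<mu> \<cdot>\<^sub>m (A * S)) = Ai * A * S"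
    using A Ai S \<mu> by (simp, subst smult_mult_smult_mat[of Ai g g "A * S" g]) auto
  ultimately show ?thesis
    using A Ai S AiA sym by (simp add: borel_block_four_block similitude_four_block_iff)
qed

lemma obtain_four_block:
  assumes "V \<in> carrier_mat (2*g) (2*g)"
  obtains A B C D where "A \<in> carrier_mat g g" "B \<in> carrier_mat g g" "C \<in> carrier_mat g g"
    "D \<in> carrier_mat g g" "V = four_block_mat A B C D"
proof -
  obtain A B C D where split: "split_block V g g = (A, B, C, D)" by (cases "split_block V g g") auto
  have "dim_row V = g + g" "dim_col V = g + g" using assms by auto
  from split_block[OF split this] show thesis by (rule that)
qed

lemma Borel_g_inverse:
  fixes A :: "'a::field mat"
  assumes A: "A \<in> Borel_g g" and inv: "is_inverse_mat g A Ai"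
  shows "upper_triangular Ai" "\<And>k. k < g \<Longrightarrow> A $$ (k,k) \<noteq> 0"
    "\<And>k. k < g \<Longrightarrow> Ai $$ (k,k) = inverse (A $$ (k,k))"
proof -
  have Ac: "A \<in> carrier_mat g g" and utA: "upper_triangular A" using A by (auto simp: Borel_g_def)
  have Aic: "Ai \<in> carrier_mat g g" and AAi: "A * Ai = 1\<^sub>m g" using inv by (auto simp: is_inverse_mat_def)
  note tri = triangular_wrt_inverse[OF Ac Aic _ _ AAi, of id]
  show "upper_triangular Ai" using tri(1) utA Ac Aic by (simp add: triangular_wrt_id_iff)
  have diag: "A $$ (k,k) * Ai $$ (k,k) = 1" if "k < g" for k
    using tri(2)[OF _ _ that] utA Ac by (simp add: triangular_wrt_id_iff)
  show "A $$ (k,k) \<noteq> 0" if "k < g" for k using diag[OF that] by force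
  show "Ai $$ (k,k) = inverse (A $$ (k,k))" if "k < g" for k using diag[OF that]
    by (simp add: Fields.inverse_unique)
qed

lemma B2g_imp_similitude_triangular:
  fixes V :: "'a::field mat"
  assumes "V \<in> B2g g"
  shows "\<exists>\<mu>. \<mu> \<noteq> 0 \<and> similitude g \<mu> V \<and> triangular_wrt (borel_rank g) V"
proof -
  obtain A Ai \<mu> S where V: "V = borel_block g A Ai \<mu> S" and A: "A \<in> Borel_g g"
    and inv: "is_inverse_mat g A Ai" and \<mu>: "\<mu> \<noteq> 0" and S: "S \<in> carrier_mat g g" "transpose_mat S = S"
    using assms unfolding B2g_def by blast
  have Ac: "A \<in> carrier_mat g g" and utA: "upper_triangular A" using A by (auto simp: Borel_g_def)
  have Aic: "Ai \<in> carrier_mat g g" and AiA: "Ai * A = 1\<^sub>m g" using inv by (auto simp: is_inverse_mat_def)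
  have "upper_triangular (\<mu> \<cdot>\<^sub>m Ai)"
    using Borel_g_inverse(1)[OF A inv] Aic by (simp add: upper_triangular_def)
  then have "triangular_wrt (borel_rank g) V"
    using Ac Aic S utA by (simp add: V borel_block_four_block triangular_wrt_borel_rank_four_block)
  then show ?thesis using borel_block_similitude[OF Ac Aic AiA S \<mu>] \<mu> V by blast
qed

text \<open>Writing V = [[A, B], [0, D]], the blocks of borel_block are recovered as
  A\<inverse> = \<mu>\<inverse> D^T and S = D^T B.\<close>
lemma similitude_triangular_imp_B2g:
  fixes V :: "'a::field mat"
  assumes \<mu>: "\<mu> \<noteq> 0" and sim: "similitude g \<mu> V" and tri: "triangular_wrt (borel_rank g) V"
  shows "V \<in> B2g g"
proof -
  obtain A B C D where A: "A \<in> carrier_mat g g" and B: "B \<in> carrier_mat g g"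
    and C: "C \<in> carrier_mat g g" and D: "D \<in> carrier_mat g g" and V: "V = four_block_mat A B C D"
    using obtain_four_block[OF similitude_carrier[OF sim]] by blast
  have utA: "upper_triangular A" and C0: "C = 0\<^sub>m g g"
    using tri A B C D by (auto simp: V triangular_wrt_borel_rank_four_block)
  have AD: "transpose_mat A * D = \<mu> \<cdot>\<^sub>m 1\<^sub>m g" and BD: "transpose_mat B * D = transpose_mat D * B"
    using sim A B D by (auto simp: V C0 similitude_four_block_iff)
  define Ai where "Ai = inverse \<mu> \<cdot>\<^sub>m transpose_mat D"
  define S where "S = transpose_mat D * B"
  have Aic: "Ai \<in> carrier_mat g g" and Sc: "S \<in> carrier_mat g g" using B D by (auto simp: Ai_def S_def)
  have "Ai * A = inverse \<mu> \<cdot>\<^sub>m transpose_mat (transpose_mat A * D)"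
    using A D by (simp add: Ai_def transpose_mult mult_smult_assoc_mat[of _ g g])
  then have AiA: "Ai * A = 1\<^sub>m g" using \<mu> by (simp add: AD)
  have AAi: "A * Ai = 1\<^sub>m g" by (rule mat_mult_left_right_inverse[OF Aic A AiA])
  have "A \<in> Borel_g g"
    using A Aic AAi AiA utA unfolding Borel_g_def invertible_mat_def inverts_mat_def by auto
  moreover have "is_inverse_mat g A Ai" using A Aic AAi AiA by (simp add: is_inverse_mat_def)
  moreover have "transpose_mat S = S" using B D BD by (simp add: S_def transpose_mult)
  moreover have "inverse \<mu> \<cdot>\<^sub>m (A * S) = B"
  proof -
    have "A * S = (\<mu> \<cdot>\<^sub>m (A * Ai)) * B"
      using A B D \<mu> by (simp add: S_def Ai_def mult_smult_distrib assoc_mult_mat[of _ g g _ g _ g])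
    then show ?thesis using B \<mu> by (simp add: AAi mult_smult_assoc_mat[of "1\<^sub>m g" g g B g])
  qed
  moreover have "\<mu> \<cdot>\<^sub>m transpose_mat Ai = D" using \<mu> by (simp add: Ai_def)
  ultimately have "V = borel_block g A Ai \<mu> S"
    by (simp add: V C0 borel_block_four_block)
  then show ?thesis
    unfolding B2g_def using \<open>A \<in> Borel_g g\<close> \<open>is_inverse_mat g A Ai\<close> \<mu> Sc \<open>transpose_mat S = S\<close> by blast
qed

lemma B2g_iff:
  "V \<in> B2g g \<longleftrightarrow> (\<exists>\<mu>. \<mu> \<noteq> 0 \<and> similitude g \<mu> V \<and> triangular_wrt (borel_rank g) (V :: 'a::field mat))"
  using B2g_imp_similitude_triangular similitude_triangular_imp_B2g by blast

lemma B2g_carrier: "V \<in> B2g g \<Longrightarrow> V \<in> carrier_mat (2*g) (2*g)"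
  by (auto simp: B2g_iff similitude_def)

lemma B2g_subset_GSp: "B2g g \<subseteq> (GSp g :: 'a::field mat set)"
  by (auto simp: B2g_iff GSp_iff)

lemma B2g_mult: "V \<in> B2g g \<Longrightarrow> W \<in> B2g g \<Longrightarrow> V * W \<in> (B2g g :: 'a::field mat set)"
  unfolding B2g_iff
  by (metis mult_eq_0_iff similitude_carrier similitude_mult triangular_wrt_mult)

lemma B2g_inverse:
  assumes P: "P \<in> B2g g" and inv: "is_inverse_mat (2*g) P Q"
  shows "Q \<in> (B2g g :: 'a::field mat set)"
proof -
  obtain \<mu> where \<mu>: "\<mu> \<noteq> 0" "similitude g \<mu> P" and tri: "triangular_wrt (borel_rank g) P"
    using P unfolding B2g_iff by blast
  have "triangular_wrt (borel_rank g) Q"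
    using triangular_wrt_inverse(1)[OF _ _ inj_on_borel_rank tri] inv by (auto simp: is_inverse_mat_def)
  then show ?thesis
    unfolding B2g_iff using similitude_inverse[OF \<mu>(2,1) inv] \<mu>(1) inverse_nonzero_iff_nonzero by blast
qed

lemma B2g_mult_diag:
  assumes "V \<in> B2g g" "W \<in> B2g g" "i < 2*g"
  shows "(V * W) $$ (i,i) = V $$ (i,i) * (W :: 'a::field mat) $$ (i,i)"
  using assms triangular_wrt_mult_diag[OF _ _ inj_on_borel_rank] by (auto simp: B2g_iff similitude_def)

lemma borel_block_diag:
  fixes A :: "'a::field mat"
  assumes A: "A \<in> Borel_g g" and inv: "is_inverse_mat g A Ai" and S: "S \<in> carrier_mat g g" and i: "i < 2*g"
  shows "borel_block g A Ai \<mu> S $$ (i,i) = (if i < g then A $$ (i,i) else \<mu> * inverse (A $$ (i-g, i-g)))"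
proof -
  have Ac: "A \<in> carrier_mat g g" and Aic: "Ai \<in> carrier_mat g g"
    using A inv by (auto simp: Borel_g_def is_inverse_mat_def)
  then show ?thesis
    using S i Borel_g_inverse(3)[OF A inv, of "i-g"] by (simp add: borel_block_four_block mult_2)
qed

section \<open>Invariance under conjugation\<close>

lemma mat_trace_mult_comm:
  assumes A: "A \<in> carrier_mat n m" and B: "B \<in> carrier_mat m n"
  shows "mat_trace (A * B) = mat_trace (B * (A :: 'a::comm_ring_1 mat))"
proof -
  have "mat_trace (A * B) = (\<Sum>i<n. \<Sum>k\<in>{0..<m}. A $$ (i,k) * B $$ (k,i))"
    unfolding mat_trace_def using A B by (simp add: scalar_prod_def)
  also have "\<dots> = (\<Sum>k\<in>{0..<m}. \<Sum>i<n. B $$ (k,i) * A $$ (i,k))"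
    by (subst sum.swap) (simp add: ac_simps)
  also have "\<dots> = mat_trace (B * A)"
    unfolding mat_trace_def using A B by (simp add: scalar_prod_def atLeast0LessThan)
  finally show ?thesis .
qed

lemma similar_mat_wit_of_inverse:
  "is_inverse_mat n P Q \<Longrightarrow> M \<in> carrier_mat n n \<Longrightarrow> similar_mat_wit (P * M * Q) M P Q"
  by (auto simp: is_inverse_mat_def intro!: similar_mat_witI)

lemma mat_trace_conj:
  assumes inv: "is_inverse_mat n P Q" and M: "M \<in> carrier_mat n n"
  shows "mat_trace (P * M * Q) = mat_trace (M :: 'a::field mat)"
proof -
  have P: "P \<in> carrier_mat n n" and Q: "Q \<in> carrier_mat n n" and QP: "Q * P = 1\<^sub>m n"
    using inv by (auto simp: is_inverse_mat_def)
  have "mat_trace (P * M * Q) = mat_trace (Q * (P * M))"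
    using P M Q by (intro mat_trace_mult_comm[of _ n n]) auto
  also have "Q * (P * M) = M"
    using P M Q QP by (simp add: assoc_mult_mat[of _ n n _ n _ n, symmetric])
  finally show ?thesis .
qed

lemma conj_index:
  assumes P: "P \<in> carrier_mat n n" and E: "E \<in> carrier_mat n n" and Q: "Q \<in> carrier_mat n n"
    and i: "i < n" and j: "j < n"
  shows "(P * E * Q) $$ (i,j) = (\<Sum>b\<in>{0..<n}. \<Sum>a\<in>{0..<n}. P $$ (i,a) * E $$ (a,b) * Q $$ (b,j))"
  using P E Q i j by (simp add: scalar_prod_def sum_distrib_left mult.assoc) (rule sum.swap)

lemma poly_mat_eval_carrier: "M \<in> carrier_mat n n \<Longrightarrow> poly_mat_eval p M \<in> carrier_mat n n"
  by (simp add: poly_mat_eval_def)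

lemma poly_mat_eval_conj:
  assumes inv: "is_inverse_mat n P Q" and M: "M \<in> carrier_mat n n"
  shows "poly_mat_eval p (P * M * Q) = P * poly_mat_eval p M * (Q :: 'a::field mat)"
proof -
  have P: "P \<in> carrier_mat n n" and Q: "Q \<in> carrier_mat n n" using inv by (auto simp: is_inverse_mat_def)
  have E: "poly_mat_eval p M \<in> carrier_mat n n" using M by (rule poly_mat_eval_carrier)
  have pow: "(P * M * Q) ^\<^sub>m k = P * M ^\<^sub>m k * Q" for k
    by (rule similar_mat_wit_pow_id[OF similar_mat_wit_of_inverse[OF inv M]])
  have dim: "dim_row (P * M * Q) = n" using P by simp
  show ?thesis
  proof (rule eq_matI)
    fix i j assume "i < dim_row (P * poly_mat_eval p M * Q)" "j < dim_col (P * poly_mat_eval p M * Q)"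
    then have ij: "i < n" "j < n" using P Q by auto
    have "poly_mat_eval p (P * M * Q) $$ (i,j) =
        (\<Sum>k\<le>Polynomial.degree p. Polynomial.coeff p k *
          (\<Sum>b\<in>{0..<n}. \<Sum>a\<in>{0..<n}. P $$ (i,a) * (M ^\<^sub>m k) $$ (a,b) * Q $$ (b,j)))"
      unfolding poly_mat_eval_def using ij P M Q
      by (simp del: assoc_mult_mat index_mult_mat add: dim pow conj_index[OF P _ Q ij])
    also have "\<dots> = (\<Sum>b\<in>{0..<n}. \<Sum>a\<in>{0..<n}.
        P $$ (i,a) * (\<Sum>k\<le>Polynomial.degree p. Polynomial.coeff p k * (M ^\<^sub>m k) $$ (a,b)) * Q $$ (b,j))"
      by (simp add: sum_distrib_left sum_distrib_right sum.swap[of _ "{..Polynomial.degree p}"] ac_simps)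
    also have "\<dots> = (P * poly_mat_eval p M * Q) $$ (i,j)"
      using M by (subst conj_index[OF P E Q ij]) (auto simp: poly_mat_eval_def intro!: sum.cong)
    finally show "poly_mat_eval p (P * M * Q) $$ (i,j) = (P * poly_mat_eval p M * Q) $$ (i,j)" .
  qed (use P Q M in \<open>auto simp: poly_mat_eval_def\<close>)
qed

lemma conj_inverse_pair:
  assumes inv: "is_inverse_mat n P Q" and M: "M \<in> carrier_mat n n"
  shows "Q * (P * M * Q) * P = (M :: 'a::field mat)"
proof -
  have P: "P \<in> carrier_mat n n" and Q: "Q \<in> carrier_mat n n" and QP: "Q * P = 1\<^sub>m n"
    using inv by (auto simp: is_inverse_mat_def)
  have "Q * (P * M * Q) * P = (Q * P) * M * (Q * P)"
    using P M Q by (simp add: assoc_mult_mat[of _ n n _ n _ n])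
  then show ?thesis using QP M by simp
qed

lemma poly_mat_eval_conj_eq_0_iff:
  assumes inv: "is_inverse_mat n P Q" and M: "M \<in> carrier_mat n n"
  shows "poly_mat_eval q (P * M * Q) = 0\<^sub>m n n \<longleftrightarrow> poly_mat_eval q (M :: 'a::field mat) = 0\<^sub>m n n"
proof
  have P: "P \<in> carrier_mat n n" and Q: "Q \<in> carrier_mat n n" using inv by (auto simp: is_inverse_mat_def)
  assume "poly_mat_eval q (P * M * Q) = 0\<^sub>m n n"
  then have "Q * poly_mat_eval q (P * M * Q) * P = 0\<^sub>m n n" using P Q by simp
  then show "poly_mat_eval q M = 0\<^sub>m n n"
    using poly_mat_eval_conj[OF is_inverse_mat_sym[OF inv], of "P * M * Q"] conj_inverse_pair[OF inv M] P M Q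
    by simp
next
  have P: "P \<in> carrier_mat n n" and Q: "Q \<in> carrier_mat n n" using inv by (auto simp: is_inverse_mat_def)
  assume "poly_mat_eval q M = 0\<^sub>m n n"
  then show "poly_mat_eval q (P * M * Q) = 0\<^sub>m n n" using P Q by (simp add: poly_mat_eval_conj[OF inv M])
qed

lemma semisimple_conj:
  assumes inv: "is_inverse_mat n P Q" and M: "M \<in> carrier_mat n n" and ss: "semisimple M"
  shows "semisimple (P * M * (Q :: 'a::field mat))"
proof -
  obtain p where "is_minimal_poly M p" and "rsquarefree (map_poly to_ac p)"
    using ss unfolding semisimple_def by blast
  moreover have "dim_row (P * M * Q) = n" "dim_row M = n" using inv M by (auto simp: is_inverse_mat_def)
  ultimately show ?thesis
    unfolding semisimple_def is_minimal_poly_def by (auto simp: poly_mat_eval_conj_eq_0_iff[OF inv M])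
qed

lemma char_poly_conj:
  assumes "is_inverse_mat n P Q" and "M \<in> carrier_mat n n"
  shows "char_poly (P * M * Q) = char_poly (M :: 'a::field mat)"
  using similar_mat_wit_of_inverse[OF assms] by (intro char_poly_similar) (auto simp: similar_mat_def)

lemma Cset_conj:
  assumes g: "g \<ge> 1" and P: "P \<in> GSp g" and inv: "is_inverse_mat (2*g) P Q" and M: "M \<in> Cset g t"
  shows "P * M * Q \<in> (Cset g t :: 'a::field mat set)"
proof -
  obtain \<nu> where \<nu>: "\<nu> \<noteq> 0" "similitude g \<nu> P" using P unfolding GSp_iff by blast
  obtain \<mu> where \<mu>: "\<mu> \<noteq> 0" "similitude g \<mu> M" and es: "eigen_split g M"
    and tr: "mat_trace M = - of_int t" using M unfolding Cset_def GSp_iff by blast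
  have Mc: "M \<in> carrier_mat (2*g) (2*g)" using \<mu> by (simp add: similitude_def)
  have sim: "similitude g \<mu> (P * M * Q)" by (rule similitude_conj[OF \<nu>(2,1) inv \<mu>(2)])
  have "eigen_split g (P * M * Q)"
    using es multiplicator_eq[OF g sim] multiplicator_eq[OF g \<mu>(2)] char_poly_conj[OF inv Mc]
    unfolding eigen_split_def by simp
  moreover have "P * M * Q \<in> GSp g" unfolding GSp_iff using sim \<mu>(1) by blast
  ultimately show ?thesis using mat_trace_conj[OF inv Mc] tr by (simp add: Cset_def)
qed

lemma conj_stable_Css:
  assumes g: "g \<ge> 1"
  shows "conj_stable g (GSp g) (Css g t :: 'a::field mat set)"
  unfolding conj_stable_def
proof (intro ballI allI impI)
  fix P Q M :: "'a mat" assume P: "P \<in> GSp g" and inv: "is_inverse_mat (2*g) P Q" and M: "M \<in> Css g t"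
  then have MC: "M \<in> Cset g t" and "semisimple M" by (auto simp: Css_def)
  moreover have "M \<in> carrier_mat (2*g) (2*g)" using MC by (simp add: Cset_def GSp_carrier)
  ultimately show "P * M * Q \<in> Css g t"
    unfolding Css_def using Cset_conj[OF g P inv MC] semisimple_conj[OF inv] by blast
qed

lemma conj_stable_CB:
  assumes g: "g \<ge> 1"
  shows "conj_stable g (B2g g) (CB g t :: 'a::field mat set)"
  unfolding conj_stable_def
proof (intro ballI allI impI)
  fix P Q M :: "'a mat" assume P: "P \<in> B2g g" and inv: "is_inverse_mat (2*g) P Q" and M: "M \<in> CB g t"
  have "P * M * Q \<in> B2g g" using M P B2g_inverse[OF P inv] by (simp add: CB_def B2g_mult)
  moreover have "P * M * Q \<in> Cset g t"
    using M P B2g_subset_GSp Cset_conj[OF g _ inv] by (auto simp: CB_def)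
  ultimately show "P * M * Q \<in> CB g t" by (simp add: CB_def)
qed

lemma conj_stable_UN:
  "(\<And>t. t \<in> T \<Longrightarrow> conj_stable g G (S t)) \<Longrightarrow> conj_stable g G (\<Union>t\<in>T. S t)"
  unfolding conj_stable_def by blast

section \<open>Characteristic polynomials of Borel elements\<close>

interpretation to_ac_hom: field_hom "to_ac :: 'a::field \<Rightarrow> 'a alg_closure"
  by unfold_locales auto

interpretation to_ac_poly: map_poly_idom_hom "to_ac :: 'a::field \<Rightarrow> 'a alg_closure" ..

lemma char_poly_four_block_lower_left_zero:
  assumes A: "A \<in> carrier_mat n n" and B: "B \<in> carrier_mat n m" and D: "D \<in> carrier_mat m m"
  shows "char_poly (four_block_mat A B (0\<^sub>m m n) D) = char_poly A * char_poly (D :: 'a::field mat)"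
proof -
  have "char_poly_matrix (four_block_mat A B (0\<^sub>m m n) D) =
      four_block_mat (char_poly_matrix A) (map_mat (\<lambda>a. [:- a:]) B) (0\<^sub>m m n) (char_poly_matrix D)"
    using A B D by (intro eq_matI) (auto simp: char_poly_matrix_def)
  then have "char_poly (four_block_mat A B (0\<^sub>m m n) D) =
      det (four_block_mat (char_poly_matrix A) (map_mat (\<lambda>a. [:- a:]) B) (0\<^sub>m m n) (char_poly_matrix D))"
    by (simp add: char_poly_def)
  also have "\<dots> = det (char_poly_matrix A) * det (char_poly_matrix D)"
    using A B D by (intro det_four_block_mat_lower_left_zero) auto
  finally show ?thesis by (simp add: char_poly_def)
qed

lemma char_poly_upper_triangular_prod:
  assumes A: "A \<in> carrier_mat n n" and ut: "upper_triangular A"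
  shows "char_poly A = (\<Prod>i<n. [:- A $$ (i,i), 1:])"
proof -
  have "char_poly A = (\<Prod>a\<leftarrow>diag_mat A. [:- a, 1:])" by (rule char_poly_upper_triangular[OF A ut])
  also have "\<dots> = (\<Prod>i\<leftarrow>[0..<n]. [:- A $$ (i,i), 1:])"
    using A by (simp add: diag_mat_def o_def)
  also have "\<dots> = (\<Prod>i<n. [:- A $$ (i,i), 1:])"
    by (simp add: prod.distinct_set_conv_list[symmetric] atLeast0LessThan)
  finally show ?thesis .
qed

lemma char_poly_borel_block:
  fixes A :: "'a::field mat"
  assumes A: "A \<in> Borel_g g" and inv: "is_inverse_mat g A Ai" and S: "S \<in> carrier_mat g g"
  shows "char_poly (borel_block g A Ai \<mu> S) =
    (\<Prod>i<g. [:- A $$ (i,i), 1:] * [:- (\<mu> * inverse (A $$ (i,i))), 1:])"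
proof -
  have Ac: "A \<in> carrier_mat g g" and ut: "upper_triangular A" using A by (auto simp: Borel_g_def)
  have Aic: "Ai \<in> carrier_mat g g" using inv by (auto simp: is_inverse_mat_def)
  have utAi: "upper_triangular (\<mu> \<cdot>\<^sub>m Ai)"
    using Borel_g_inverse(1)[OF A inv] Aic by (simp add: upper_triangular_def)
  note diag = Borel_g_inverse(3)[OF A inv]
  have "char_poly (\<mu> \<cdot>\<^sub>m transpose_mat Ai) = char_poly (transpose_mat (\<mu> \<cdot>\<^sub>m Ai))" by simp
  also have "\<dots> = char_poly (\<mu> \<cdot>\<^sub>m Ai)" using Aic by (intro char_poly_transpose_mat) auto
  also have "\<dots> = (\<Prod>i<g. [:- (\<mu> * inverse (A $$ (i,i))), 1:])"
    using Aic utAi diag by (simp add: char_poly_upper_triangular_prod[of _ g])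
  finally have "char_poly (borel_block g A Ai \<mu> S) =
      (\<Prod>i<g. [:- A $$ (i,i), 1:]) * (\<Prod>i<g. [:- (\<mu> * inverse (A $$ (i,i))), 1:])"
    unfolding borel_block_four_block using Ac Aic S ut
    by (simp add: char_poly_four_block_lower_left_zero[of _ g _ g] char_poly_upper_triangular_prod)
  then show ?thesis by (simp only: prod.distrib)
qed

lemma eigen_split_of_char_poly:
  fixes V :: "'a::field mat"
  assumes g: "g \<ge> 1" and sim: "similitude g \<mu> V" and d: "\<And>i. i < g \<Longrightarrow> d i \<noteq> 0"
    and cp: "char_poly V = (\<Prod>i<g. [:- d i, 1:] * [:- (\<mu> * inverse (d i)), 1:])"
  shows "eigen_split g V"
  unfolding eigen_split_def
proof (intro exI[of _ "\<lambda>i. to_ac (d i)"] conjI allI impI)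
  show "map_poly to_ac (char_poly V) =
      (\<Prod>i<g. [:- to_ac (d i), 1:] * [:- (to_ac (multiplicator g V) * inverse (to_ac (d i))), 1:])"
    unfolding cp multiplicator_eq[OF g sim] by (simp add: to_ac_poly.hom_prod to_ac_poly.hom_mult)
  show "to_ac (d i) \<in> to_ac ` (UNIV - {0})" if "i < g" for i using d[OF that] by auto
qed

lemma B2g_eigen_split:
  assumes g: "g \<ge> 1" and V: "V \<in> (B2g g :: 'a::field mat set)"
  shows "eigen_split g V"
proof -
  obtain A Ai \<mu> S where V: "V = borel_block g A Ai \<mu> S" and A: "A \<in> Borel_g g"
    and inv: "is_inverse_mat g A Ai" and \<mu>: "\<mu> \<noteq> 0" and S: "S \<in> carrier_mat g g" "transpose_mat S = S"
    using V unfolding B2g_def by blast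
  have Ac: "A \<in> carrier_mat g g" and Aic: "Ai \<in> carrier_mat g g" and AiA: "Ai * A = 1\<^sub>m g"
    using A inv by (auto simp: Borel_g_def is_inverse_mat_def)
  show ?thesis
    unfolding V using borel_block_similitude[OF Ac Aic AiA S \<mu>] char_poly_borel_block[OF A inv S(1)]
      Borel_g_inverse(2)[OF A inv]
    by (intro eigen_split_of_char_poly[OF g]) auto
qed

section \<open>A semisimple diagonal element of prescribed trace\<close>

definition diag_witness :: "nat \<Rightarrow> 'a \<Rightarrow> 'a \<Rightarrow> 'a::field mat" where
  "diag_witness g a b = mat_diag (2*g) (\<lambda>i. if i < g then a else b)"

lemma diag_witness_four_block:
  "diag_witness g a b = four_block_mat (a \<cdot>\<^sub>m 1\<^sub>m g) (0\<^sub>m g g) (0\<^sub>m g g) (b \<cdot>\<^sub>m 1\<^sub>m g)"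
  by (rule eq_matI) (auto simp: diag_witness_def mat_diag_def)

lemma diag_witness_B2g:
  assumes "a \<noteq> 0" "b \<noteq> 0"
  shows "diag_witness g a b \<in> B2g g"
proof (rule similitude_triangular_imp_B2g)
  show "a * b \<noteq> 0" using assms by simp
  show "similitude g (a * b) (diag_witness g a b)"
    unfolding diag_witness_four_block by (subst similitude_four_block_iff) auto
  show "triangular_wrt (borel_rank g) (diag_witness g a b)"
    unfolding diag_witness_four_block
    by (subst triangular_wrt_borel_rank_four_block) (auto simp: upper_triangular_def)
qed

lemma mat_trace_diag_witness: "mat_trace (diag_witness g a b) = of_nat g * (a + b)"
proof -
  have "mat_trace (diag_witness g a b) = (\<Sum>i<g. a) + (\<Sum>i\<in>{g..<2*g}. b)"
    by (simp add: mat_trace_def diag_witness_def mat_diag_def lessThan_atLeast0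
        sum.atLeastLessThan_concat[of 0 g "2*g", symmetric])
  then show ?thesis by (simp add: algebra_simps)
qed

lemma mat_diag_dim [simp]: "dim_row (mat_diag n f) = n" "dim_col (mat_diag n f) = n"
  by (simp_all add: mat_diag_def)

lemma mat_diag_pow: "mat_diag n f ^\<^sub>m k = mat_diag n (\<lambda>i. f i ^ k)"
  by (induct k) (simp_all add: power_Suc2 del: power_Suc)

lemma poly_mat_eval_mat_diag: "poly_mat_eval q (mat_diag n f) = mat_diag n (\<lambda>i. poly q (f i))"
proof (rule eq_matI)
  fix i j assume "i < dim_row (mat_diag n (\<lambda>i. poly q (f i)))" "j < dim_col (mat_diag n (\<lambda>i. poly q (f i)))"
  then show "poly_mat_eval q (mat_diag n f) $$ (i,j) = mat_diag n (\<lambda>i. poly q (f i)) $$ (i,j)"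
    unfolding poly_mat_eval_def mat_diag_dim mat_diag_pow by (simp add: mat_diag_def poly_altdef)
qed (auto simp: poly_mat_eval_def)

lemma order_monic_linear: "Polynomial.order x [:- c, 1:] = (if x = c then 1 else (0::nat))"
  for c :: "'a::idom"
proof (cases "x = c")
  case True then show ?thesis using order_power_n_n[of c 1] by simp
next
  case False then show ?thesis by (simp add: order_0I)
qed

lemma rsquarefree_monic_linear: "rsquarefree [:- c, 1:]" for c :: "'a::idom"
  by (simp add: rsquarefree_def order_monic_linear)

lemma rsquarefree_monic_linear_mult:
  fixes c d :: "'a::idom"
  assumes "c \<noteq> d"
  shows "rsquarefree ([:- c, 1:] * [:- d, 1:])"
  unfolding rsquarefree_def
proof (intro conjI allI)
  fix x
  have "Polynomial.order x ([:- c, 1:] * [:- d, 1:]) =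
      Polynomial.order x [:- c, 1:] + Polynomial.order x [:- d, 1:]"
    by (rule order_mult) simp
  then show "Polynomial.order x ([:- c, 1:] * [:- d, 1:]) = 0 \<or>
      Polynomial.order x ([:- c, 1:] * [:- d, 1:]) = 1"
    using assms by (simp add: order_monic_linear)
qed simp

lemma min_poly_two_roots:
  fixes a b :: "'a::field"
  defines "p \<equiv> if a = b then [:- a, 1:] else [:- a, 1:] * [:- b, 1:]"
  shows "Polynomial.lead_coeff p = 1" "poly p a = 0" "poly p b = 0"
    "\<And>q. q \<noteq> 0 \<Longrightarrow> poly q a = 0 \<Longrightarrow> poly q b = 0 \<Longrightarrow> Polynomial.degree p \<le> Polynomial.degree q"
    "rsquarefree (map_poly (to_ac :: 'a \<Rightarrow> 'a alg_closure) p)"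
proof -
  show "Polynomial.lead_coeff p = 1" "poly p a = 0" "poly p b = 0" by (auto simp: p_def lead_coeff_mult)
  fix q :: "'a poly" assume q: "q \<noteq> 0" "poly q a = 0" "poly q b = 0"
  have "p dvd q"
  proof (cases "a = b")
    case False
    obtain r where r: "q = [:- a, 1:] * r" using q(2) by (auto simp: poly_eq_0_iff_dvd elim: dvdE)
    have "poly r b = 0" using q(3) False by (simp add: r)
    then obtain s where "r = [:- b, 1:] * s" by (auto simp: poly_eq_0_iff_dvd elim: dvdE)
    then have "q = ([:- a, 1:] * [:- b, 1:]) * s" by (simp only: r mult.assoc)
    then have "[:- a, 1:] * [:- b, 1:] dvd q" by (rule dvdI)
    with False show ?thesis by (simp add: p_def)
  qed (use q in \<open>simp add: p_def poly_eq_0_iff_dvd\<close>)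
  then show "Polynomial.degree p \<le> Polynomial.degree q" using q(1) by (rule dvd_imp_degree_le)
next
  show "rsquarefree (map_poly (to_ac :: 'a \<Rightarrow> 'a alg_closure) p)"
  proof (cases "a = b")
    case False
    then have "map_poly (to_ac :: 'a \<Rightarrow> 'a alg_closure) p = [:- to_ac a, 1:] * [:- to_ac b, 1:]"
      by (simp add: p_def to_ac_poly.hom_mult)
    moreover have "to_ac a \<noteq> (to_ac b :: 'a alg_closure)" using False by simp
    ultimately show ?thesis using rsquarefree_monic_linear_mult by metis
  qed (simp add: p_def rsquarefree_monic_linear)
qed

lemma semisimple_diag_witness:
  assumes g: "g \<ge> 1"
  shows "semisimple (diag_witness g a b)"
proof -
  let ?D = "diag_witness g a b"
  define p where "p = (if a = b then [:- a, 1:] else [:- a, 1:] * [:- b, 1:])"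
  note p = min_poly_two_roots[where a = a and b = b, folded p_def]
  have eval: "poly_mat_eval q ?D = mat_diag (2*g) (\<lambda>i. if i < g then poly q a else poly q b)" for q
    by (simp add: diag_witness_def poly_mat_eval_mat_diag if_distrib)
  have dim: "dim_row ?D = 2*g" by (simp add: diag_witness_def)
  have "is_minimal_poly ?D p"
    unfolding is_minimal_poly_def dim
  proof (intro conjI allI impI)
    show "Polynomial.lead_coeff p = 1" by (rule p(1))
    show "poly_mat_eval p ?D = 0\<^sub>m (2*g) (2*g)"
      unfolding eval by (rule eq_matI) (auto simp: p(2,3) mat_diag_def)
    fix q assume q: "q \<noteq> 0 \<and> poly_mat_eval q ?D = 0\<^sub>m (2*g) (2*g)"
    then have "poly_mat_eval q ?D $$ (0,0) = 0" "poly_mat_eval q ?D $$ (g,g) = 0" using g by auto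
    then have "poly q a = 0" "poly q b = 0" using g by (auto simp: eval mat_diag_def)
    then show "Polynomial.degree p \<le> Polynomial.degree q" using p(4) q by blast
  qed
  then show ?thesis using p(5) unfolding semisimple_def by blast
qed

lemma CHAR_eq_prime_card:
  assumes "Factorial_Ring.prime (card (UNIV :: 'a::{finite,field} set))"
  shows "CHAR('a) = card (UNIV :: 'a set)"
  using assms CHAR_dvd_CARD[where 'a = 'a] by (auto simp: prime_nat_iff)

lemma of_nat_nonzero_of_prime_card:
  assumes p: "Factorial_Ring.prime (card (UNIV :: 'a::{finite,field} set))"
    and nd: "\<not> card (UNIV :: 'a set) dvd 2 * g"
  shows "of_nat g \<noteq> (0::'a)"
proof -
  have "\<not> card (UNIV :: 'a set) dvd g" using nd by (meson dvd_mult)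
  then show ?thesis by (simp add: of_nat_eq_0_iff_char_dvd CHAR_eq_prime_card[OF p])
qed

lemma card_ge_3_of_prime_card:
  assumes p: "Factorial_Ring.prime (card (UNIV :: 'a::{finite,field} set))"
    and nd: "\<not> card (UNIV :: 'a set) dvd 2 * g"
  shows "card (UNIV :: 'a set) \<ge> 3"
  using prime_ge_2_nat[OF p] nd by (cases "card (UNIV :: 'a set) = 2") auto

lemma exists_nonzero_summands:
  assumes "card (UNIV :: 'a::{finite,field} set) \<ge> 3"
  shows "\<exists>a b :: 'a. a \<noteq> 0 \<and> b \<noteq> 0 \<and> a + b = s"
proof -
  have "card {0, s} < card (UNIV :: 'a set)" using assms card_le_Suc0_iff_eq[of "{s}"]
    by (simp add: card_insert_if)
  then obtain a :: 'a where "a \<notin> {0, s}" by (metis UNIV_I card_mono finite subsetI leD)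
  then show ?thesis by (intro exI[of _ a] exI[of _ "s - a"]) auto
qed

lemma Css_CB_common_element:
  assumes g: "g \<ge> 1" and p: "Factorial_Ring.prime (card (UNIV :: 'a::{finite,field} set))"
    and nd: "\<not> card (UNIV :: 'a set) dvd 2 * g"
  shows "\<exists>D :: 'a mat. D \<in> Css g t \<and> D \<in> CB g t"
proof -
  obtain a b :: 'a where ab: "a \<noteq> 0" "b \<noteq> 0" "a + b = - of_int t / of_nat g"
    using exists_nonzero_summands[OF card_ge_3_of_prime_card[OF p nd]] by blast
  let ?D = "diag_witness g a b"
  have B: "?D \<in> B2g g" by (rule diag_witness_B2g[OF ab(1,2)])
  have "mat_trace ?D = - of_int t"
    using of_nat_nonzero_of_prime_card[OF p nd] by (simp add: mat_trace_diag_witness ab(3))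
  then have "?D \<in> Cset g t"
    using B B2g_subset_GSp B2g_eigen_split[OF g B] by (auto simp: Cset_def)
  then show ?thesis using B semisimple_diag_witness[OF g] by (auto simp: Css_def CB_def)
qed

section \<open>Multiplication by unipotent elements\<close>

lemma U2g_B2g_diag:
  assumes "U \<in> (U2g g :: 'a::field mat set)"
  shows "U \<in> B2g g" "\<And>i. i < 2*g \<Longrightarrow> U $$ (i,i) = 1"
proof -
  obtain A Ai S where U: "U = borel_block g A Ai 1 S" and A: "A \<in> Unip_g g" and inv: "is_inverse_mat g A Ai"
    and S: "S \<in> carrier_mat g g" "transpose_mat S = S" using assms unfolding U2g_def by blast
  have Bor: "A \<in> Borel_g g" and diag: "\<And>i. i < g \<Longrightarrow> A $$ (i,i) = 1" using A by (auto simp: Unip_g_def)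
  show "U \<in> B2g g" unfolding U B2g_def using Bor inv S by fastforce
  show "U $$ (i,i) = 1" if "i < 2*g" for i
    using that diag[of i] diag[of "i-g"] by (simp add: U borel_block_diag[OF Bor inv S(1)])
qed

lemma U'2g_B2g_diag:
  assumes g: "g \<ge> 1" and "U \<in> (U'2g g :: 'a::field mat set)"
  shows "U \<in> B2g g" "\<exists>c. \<forall>i < 2*g. U $$ (i,i) = c"
proof -
  obtain A Ai S where U: "U = borel_block g A Ai ((dA A)^2) S" and A: "A \<in> Unip'_g g"
    and inv: "is_inverse_mat g A Ai" and S: "S \<in> carrier_mat g g" "transpose_mat S = S"
    using assms(2) unfolding U'2g_def by blast
  obtain c where Bor: "A \<in> Borel_g g" and c: "c \<noteq> 0" and diag: "\<And>i. i < g \<Longrightarrow> A $$ (i,i) = c"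
    using A by (auto simp: Unip'_g_def)
  have dA: "dA A = c" using diag[of 0] g by (simp add: dA_def)
  show "U \<in> B2g g" unfolding U B2g_def using Bor inv S c dA by fastforce
  have "U $$ (i,i) = c" if "i < 2*g" for i
    using that diag[of i] diag[of "i-g"] c
    by (simp add: U dA borel_block_diag[OF Bor inv S(1)] power2_eq_square)
  then show "\<exists>c. \<forall>i < 2*g. U $$ (i,i) = c" by blast
qed

lemma const_diag_mult_CB:
  assumes g: "g \<ge> 1" and V: "V \<in> B2g g" and d: "\<And>i. i < 2*g \<Longrightarrow> V $$ (i,i) = c"
    and M: "M \<in> CB g t" and t': "c * (- of_int t) = - of_int t'"
  shows "V * M \<in> (CB g t' :: 'a::field mat set)"
proof -
  have MB: "M \<in> B2g g" and MC: "M \<in> Cset g t" using M by (auto simp: CB_def)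
  have VM: "V * M \<in> B2g g" by (rule B2g_mult[OF V MB])
  have "mat_trace (V * M) = (\<Sum>i<2*g. c * M $$ (i,i))"
    using B2g_carrier[OF V] B2g_carrier[OF MB]
    by (simp add: mat_trace_def B2g_mult_diag[OF V MB] d del: index_mult_mat(1))
  also have "\<dots> = c * mat_trace M"
    using B2g_carrier[OF MB] by (simp add: mat_trace_def sum_distrib_left)
  finally have "mat_trace (V * M) = - of_int t'" using MC t' by (simp add: Cset_def)
  then show ?thesis
    using VM B2g_subset_GSp B2g_eigen_split[OF g VM] by (auto simp: CB_def Cset_def)
qed

lemma CB_le_eq_UN: "CB_le g z = (\<Union>t \<in> {t::int. \<bar>real_of_int t\<bar> \<le> z}. CB g t)"
  by (auto simp: CB_le_def Cset_le_def CB_def)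

lemma U2g_mult_CB:
  "g \<ge> 1 \<Longrightarrow> U \<in> U2g g \<Longrightarrow> M \<in> CB g t \<Longrightarrow> U * M \<in> (CB g t :: 'a::field mat set)"
  using const_diag_mult_CB[of g U 1 M t t] U2g_B2g_diag[of U g] by simp

lemma U'2g_mult_CB_0:
  assumes "g \<ge> 1" "U \<in> U'2g g" "M \<in> CB g 0"
  shows "U * M \<in> (CB g 0 :: 'a::field mat set)"
proof -
  obtain c where "\<forall>i < 2*g. U $$ (i,i) = c" using U'2g_B2g_diag(2)[OF assms(1,2)] by blast
  then show ?thesis using const_diag_mult_CB[OF assms(1) U'2g_B2g_diag(1)[OF assms(1,2)] _ assms(3)] by simp
qed

section \<open>Symplectic transvections\<close>

text \<open>The matrix of the symplectic transvection x \<mapsto> x + c \<omega>(u,x) u.\<close>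
definition transvection :: "nat \<Rightarrow> 'a::field \<Rightarrow> 'a vec \<Rightarrow> 'a mat" where
  "transvection g c u =
     mat (2*g) (2*g) (\<lambda>(i,j). (if i = j then 1 else 0) + c * sform g u (unit_vec (2*g) j) * u $ i)"

lemma transvection_carrier: "transvection g c u \<in> carrier_mat (2*g) (2*g)"
  by (simp add: transvection_def)

lemma col_transvection:
  assumes u: "u \<in> carrier_vec (2*g)" and j: "j < 2*g"
  shows "col (transvection g c u) j = unit_vec (2*g) j + (c * sform g u (unit_vec (2*g) j)) \<cdot>\<^sub>v u"
  using u j by (intro eq_vecI) (auto simp: transvection_def)

lemma transvection_mult_vec:
  assumes u: "u \<in> carrier_vec (2*g)" and x: "x \<in> carrier_vec (2*g)"
  shows "transvection g c u *\<^sub>v x = x + (c * sform g u x) \<cdot>\<^sub>v u"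
proof (rule eq_vecI)
  fix i assume "i < dim_vec (x + (c * sform g u x) \<cdot>\<^sub>v u)"
  then have i: "i < 2*g" using u by auto
  have "(transvection g c u *\<^sub>v x) $ i =
      (\<Sum>j\<in>{0..<2*g}. ((if i = j then 1 else 0) + c * sform g u (unit_vec (2*g) j) * u $ i) * x $ j)"
    using i x by (simp add: transvection_def scalar_prod_def)
  also have "\<dots> = (\<Sum>j\<in>{0..<2*g}. (if i = j then x $ j else 0)) +
      c * u $ i * (\<Sum>j\<in>{0..<2*g}. sform g u (unit_vec (2*g) j) * x $ j)"
    by (subst sum_distrib_left, subst sum.distrib[symmetric]) (auto intro!: sum.cong simp: algebra_simps)
  also have "\<dots> = x $ i + c * u $ i * sform g u x"
    using i by (simp add: sform_in_unit_vec_coordinates[OF x])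
  finally show "(transvection g c u *\<^sub>v x) $ i = (x + (c * sform g u x) \<cdot>\<^sub>v u) $ i"
    using i u x by (simp add: ac_simps)
qed (use u x in \<open>auto simp: transvection_def\<close>)

lemma transvection_similitude:
  assumes u: "u \<in> carrier_vec (2*g)"
  shows "similitude g 1 (transvection g c u)"
proof -
  have T: "transvection g c u \<in> carrier_mat (2*g) (2*g)" by (rule transvection_carrier)
  have "transpose_mat (transvection g c u) * Jmat g * transvection g c u = Jmat g"
  proof (rule eq_matI)
    fix i j assume "i < dim_row (Jmat g :: 'a mat)" "j < dim_col (Jmat g :: 'a mat)"
    then have ij: "i < 2*g" "j < 2*g" by auto
    let ?ei = "unit_vec (2*g) i :: 'a vec" and ?ej = "unit_vec (2*g) j :: 'a vec"
    have ei: "?ei \<in> carrier_vec (2*g)" and ej: "?ej \<in> carrier_vec (2*g)" by auto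
    have "(transpose_mat (transvection g c u) * Jmat g * transvection g c u) $$ (i,j) =
        sform g (?ei + (c * sform g u ?ei) \<cdot>\<^sub>v u) (?ej + (c * sform g u ?ej) \<cdot>\<^sub>v u)"
      unfolding gram_Jmat_index[OF T T ij] col_transvection[OF u ij(1)] col_transvection[OF u ij(2)] ..
    also have "\<dots> = sform g ?ei ?ej"
      unfolding sform_add_smult_left[OF ei u] sform_add_smult_right[OF ej u] sform_antisym[of g ?ei u]
      by (simp add: algebra_simps)
    finally show "(transpose_mat (transvection g c u) * Jmat g * transvection g c u) $$ (i,j) =
        Jmat g $$ (i,j)"
      using ij by (simp add: sform_unit_vec_unit_vec)
  qed (use T in auto)
  then show ?thesis using T by (simp add: similitude_def)
qed

lemma transvection_maps:
  assumes x: "x \<in> carrier_vec (2*g)" and y: "y \<in> carrier_vec (2*g)" and nz: "sform g y x \<noteq> (0::'a::field)"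
  shows "transvection g (inverse (sform g y x)) (y - x) *\<^sub>v x = y"
proof -
  have u: "y - x \<in> carrier_vec (2*g)" using x y by simp
  have "y - x = y + (-1) \<cdot>\<^sub>v x" using x y by (intro eq_vecI) auto
  then have "sform g (y - x) x = sform g y x"
    using sform_add_smult_left[OF y x, of "-1" x] by simp
  then have "transvection g (inverse (sform g y x)) (y - x) *\<^sub>v x = x + 1 \<cdot>\<^sub>v (y - x)"
    using nz by (simp add: transvection_mult_vec[OF u x])
  also have "\<dots> = y" using x y by (intro eq_vecI) auto
  finally show ?thesis .
qed

lemma transvection_exists:
  assumes "x \<in> carrier_vec (2*g)" "y \<in> carrier_vec (2*g)" "sform g y x \<noteq> (0::'a::field)"
  shows "\<exists>T. similitude g 1 T \<and> T *\<^sub>v x = y"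
  using transvection_similitude[of "y - x" g "inverse (sform g y x)"] transvection_maps[OF assms] assms(1,2)
  by auto

lemma sform_nondegenerate:
  assumes x: "x \<in> carrier_vec (2*g)" and nz: "x \<noteq> 0\<^sub>v (2*g)"
  shows "\<exists>z \<in> carrier_vec (2*g). sform g x z \<noteq> (0::'a::field)"
proof -
  obtain i where i: "i < 2*g" "x $ i \<noteq> 0" using x nz by (metis eq_vecI carrier_vecD index_zero_vec(1,2))
  then have "sform g x (unit_vec (2*g) (sympl_partner g i)) \<noteq> 0"
    by (auto simp: sympl_partner_def sform_unit_vec_right)
  then show ?thesis by (intro bexI[of _ "unit_vec (2*g) (sympl_partner g i)"]) auto
qed

text \<open>A vector space is not the union of two proper subspaces, here two symplectic orthogonals.\<close>
lemma exists_sform_nonzero_both: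
  assumes x: "x \<in> carrier_vec (2*g)" "x \<noteq> 0\<^sub>v (2*g)" and y: "y \<in> carrier_vec (2*g)" "y \<noteq> 0\<^sub>v (2*g)"
  shows "\<exists>z \<in> carrier_vec (2*g). sform g z x \<noteq> 0 \<and> sform g y z \<noteq> (0::'a::field)"
proof -
  obtain a where a: "a \<in> carrier_vec (2*g)" "sform g x a \<noteq> 0"
    using sform_nondegenerate[OF x] by blast
  then have a: "a \<in> carrier_vec (2*g)" "sform g a x \<noteq> 0" using sform_antisym[of g x a] by auto
  obtain b where b: "b \<in> carrier_vec (2*g)" "sform g y b \<noteq> 0"
    using sform_nondegenerate[OF y] by blast
  consider "sform g y a \<noteq> 0" | "sform g b x \<noteq> 0" | "sform g y a = 0" "sform g b x = 0" by blast
  then show ?thesis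
  proof cases
    case 3
    have "sform g (a + b) x = sform g a x" "sform g y (a + b) = sform g y b"
      using 3 sform_add_smult_left[OF a(1) b(1), of 1 x] sform_add_smult_right[OF a(1) b(1), of y 1]
      by simp_all
    then show ?thesis using a b by (intro bexI[of _ "a + b"]) auto
  qed (use a b in blast)+
qed

lemma Sp_transitive:
  assumes x: "x \<in> carrier_vec (2*g)" "x \<noteq> 0\<^sub>v (2*g)" and y: "y \<in> carrier_vec (2*g)" "y \<noteq> 0\<^sub>v (2*g)"
  shows "\<exists>T. similitude g (1::'a::field) T \<and> T *\<^sub>v x = y"
proof -
  obtain z where z: "z \<in> carrier_vec (2*g)" "sform g z x \<noteq> 0" "sform g y z \<noteq> 0"
    using exists_sform_nonzero_both[OF x y] by blast
  obtain T1 where T1: "similitude g 1 T1" "T1 *\<^sub>v x = z" using transvection_exists[OF x(1) z(1,2)] by blast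
  obtain T2 where T2: "similitude g 1 T2" "T2 *\<^sub>v z = y" using transvection_exists[OF z(1) y(1) z(3)] by blast
  have "(T2 * T1) *\<^sub>v x = T2 *\<^sub>v (T1 *\<^sub>v x)"
    using T1(1) T2(1) x(1) by (intro assoc_mult_mat_vec) (auto simp: similitude_def)
  then show ?thesis using similitude_mult[OF T2(1) T1(1)] T1(2) T2(2) by auto
qed

section \<open>Splitting off a hyperbolic pair\<close>

text \<open>skip_pair h enumerates, in increasing order, the indices below 2 * Suc h other than the
  hyperbolic pair 0, Suc h (the basis vectors e_1, f_1); unskip_pair h is its inverse.\<close>
definition skip_pair :: "nat \<Rightarrow> nat \<Rightarrow> nat" where "skip_pair h c = Suc (if c < h then c else Suc c)"

definition unskip_pair :: "nat \<Rightarrow> nat \<Rightarrow> nat" where "unskip_pair h i = (if i < Suc h then i - 1 else i - 2)"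

lemma skip_pair_simps [simp]:
  "skip_pair h c \<noteq> 0" "0 \<noteq> skip_pair h c" "skip_pair h c \<noteq> Suc h" "Suc h \<noteq> skip_pair h c"
  "unskip_pair h (skip_pair h c) = c" "skip_pair h c = skip_pair h d \<longleftrightarrow> c = d"
  "c < 2*h \<Longrightarrow> skip_pair h c < Suc (Suc (2*h))" "c < 2*h \<Longrightarrow> skip_pair h c < 2 * Suc h"
  by (auto simp: skip_pair_def unskip_pair_def)

lemma unskip_pair_facts:
  assumes "i < 2 * Suc h" "i \<noteq> 0" "i \<noteq> Suc h"
  shows "skip_pair h (unskip_pair h i) = i" "unskip_pair h i < 2*h"
  using assms by (auto simp: skip_pair_def unskip_pair_def)

lemma borel_rank_skip_pair: "c < 2*h \<Longrightarrow> borel_rank (Suc h) (skip_pair h c) = Suc (borel_rank h c)"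
  by (auto simp: borel_rank_def skip_pair_def)

lemma sum_skip_pair: "(\<Sum>k<2 * Suc h. f k) = f 0 + f (Suc h) + (\<Sum>c<2*h. f (skip_pair h c))"
proof -
  have "x \<in> skip_pair h ` {..<2*h}" if "x < 2 * Suc h" "x \<noteq> 0" "x \<noteq> Suc h" for x
    using unskip_pair_facts[OF that] by (intro image_eqI[of _ _ "unskip_pair h x"]) auto
  then have "skip_pair h ` {..<2*h} = {..<2 * Suc h} - {0, Suc h}" by auto
  moreover have "inj_on (skip_pair h) {..<2*h}" by (simp add: inj_on_def)
  ultimately have "(\<Sum>c<2*h. f (skip_pair h c)) = (\<Sum>k \<in> {..<2 * Suc h} - {0, Suc h}. f k)"
    using sum.reindex[of "skip_pair h" "{..<2*h}" f] by (simp add: o_def)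
  moreover have "(\<Sum>k<2 * Suc h. f k) = f 0 + (\<Sum>k \<in> {..<2 * Suc h} - {0}. f k)"
    by (rule sum.remove) auto
  moreover have "(\<Sum>k \<in> {..<2 * Suc h} - {0}. f k) = f (Suc h) + (\<Sum>k \<in> {..<2 * Suc h} - {0} - {Suc h}. f k)"
    by (rule sum.remove) auto
  ultimately show ?thesis by (simp add: Diff_insert2[symmetric] add.assoc)
qed

definition drop_pair_vec :: "nat \<Rightarrow> 'a vec \<Rightarrow> 'a vec" where
  "drop_pair_vec h x = vec (2*h) (\<lambda>c. x $ skip_pair h c)"

definition drop_pair_mat :: "nat \<Rightarrow> 'a mat \<Rightarrow> 'a mat" where
  "drop_pair_mat h V = mat (2*h) (2*h) (\<lambda>(a,b). V $$ (skip_pair h a, skip_pair h b))"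

lemma drop_pair_mat_carrier: "drop_pair_mat h V \<in> carrier_mat (2*h) (2*h)"
  by (simp add: drop_pair_mat_def)

lemma sform_drop_pair:
  fixes x y :: "'a::comm_ring_1 vec"
  assumes x: "x \<in> carrier_vec (2 * Suc h)" and y: "y \<in> carrier_vec (2 * Suc h)"
  shows "sform (Suc h) x y =
    (x $ 0 * y $ Suc h - x $ Suc h * y $ 0) + sform h (drop_pair_vec h x) (drop_pair_vec h y)"
proof -
  have "sform (Suc h) x y = (x $ 0 * y $ (0 + Suc h) - x $ (0 + Suc h) * y $ 0) +
      (\<Sum>c<h. x $ Suc c * y $ (Suc c + Suc h) - x $ (Suc c + Suc h) * y $ Suc c)"
    unfolding sform_def by (rule sum.lessThan_Suc_shift)
  also have "(\<Sum>c<h. x $ Suc c * y $ (Suc c + Suc h) - x $ (Suc c + Suc h) * y $ Suc c) =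
      sform h (drop_pair_vec h x) (drop_pair_vec h y)"
    unfolding sform_def drop_pair_vec_def by (intro sum.cong) (auto simp: skip_pair_def)
  finally show ?thesis by simp
qed

lemma Jmat_skip_pair:
  assumes "a < 2*h" "b < 2*h"
  shows "(Jmat (Suc h) :: 'a::field mat) $$ (skip_pair h a, skip_pair h b) = Jmat h $$ (a,b)"
  using assms by (auto simp: Jmat_index sympl_partner_def skip_pair_def)

lemma col_drop_pair_mat:
  assumes V: "V \<in> carrier_mat (2 * Suc h) (2 * Suc h)" and a: "a < 2*h"
  shows "col (drop_pair_mat h V) a = drop_pair_vec h (col V (skip_pair h a))"
  using V a by (intro eq_vecI) (auto simp: drop_pair_mat_def drop_pair_vec_def)

lemma similitude_drop_pair_mat:
  fixes V :: "'a::field mat"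
  assumes sim: "similitude (Suc h) \<mu> V" and row: "\<And>b. b < 2*h \<Longrightarrow> V $$ (Suc h, skip_pair h b) = 0"
  shows "similitude h \<mu> (drop_pair_mat h V)"
proof -
  let ?N = "drop_pair_mat h V"
  have V: "V \<in> carrier_mat (2 * Suc h) (2 * Suc h)" using sim by (rule similitude_carrier)
  have "transpose_mat ?N * Jmat h * ?N = \<mu> \<cdot>\<^sub>m Jmat h"
  proof (rule eq_matI)
    fix a b assume "a < dim_row (\<mu> \<cdot>\<^sub>m Jmat h :: 'a mat)" "b < dim_col (\<mu> \<cdot>\<^sub>m Jmat h :: 'a mat)"
    then have ab: "a < 2*h" "b < 2*h" by auto
    let ?x = "col V (skip_pair h a)" and ?y = "col V (skip_pair h b)"
    have x: "?x \<in> carrier_vec (2 * Suc h)" and y: "?y \<in> carrier_vec (2 * Suc h)"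
      using carrier_matD[OF V] by (auto intro!: carrier_vecI)
    have "(transpose_mat ?N * Jmat h * ?N) $$ (a,b) = sform h (drop_pair_vec h ?x) (drop_pair_vec h ?y)"
      using V ab
      by (simp add: gram_Jmat_index[OF drop_pair_mat_carrier drop_pair_mat_carrier] col_drop_pair_mat)
    also have "\<dots> = sform (Suc h) ?x ?y"
      using V ab row[OF ab(1)] row[OF ab(2)] by (simp add: sform_drop_pair[OF x y])
    also have "\<dots> = (transpose_mat V * Jmat (Suc h) * V) $$ (skip_pair h a, skip_pair h b)"
      using V ab by (intro gram_Jmat_index[symmetric]) auto
    also have "\<dots> = (\<mu> \<cdot>\<^sub>m Jmat h) $$ (a,b)"
      using sim ab by (simp add: similitude_def Jmat_skip_pair)
    finally show "(transpose_mat ?N * Jmat h * ?N) $$ (a,b) = (\<mu> \<cdot>\<^sub>m Jmat h) $$ (a,b)" .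
  qed (auto simp: drop_pair_mat_def)
  then show ?thesis using drop_pair_mat_carrier by (simp add: similitude_def)
qed

definition embed_pair_mat :: "nat \<Rightarrow> 'a::field mat \<Rightarrow> 'a mat" where
  "embed_pair_mat h Z = mat (2 * Suc h) (2 * Suc h) (\<lambda>(i,j).
     if i = 0 \<or> i = Suc h \<or> j = 0 \<or> j = Suc h then (if i = j then 1 else 0)
     else Z $$ (unskip_pair h i, unskip_pair h j))"

lemma embed_pair_mat_carrier: "embed_pair_mat h Z \<in> carrier_mat (2 * Suc h) (2 * Suc h)"
  by (simp add: embed_pair_mat_def)

lemma embed_pair_mat_index:
  assumes "i < 2 * Suc h" "j < 2 * Suc h"
  shows "embed_pair_mat h Z $$ (i,j) =
    (if i = 0 \<or> i = Suc h \<or> j = 0 \<or> j = Suc h then (if i = j then 1 else 0)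
     else Z $$ (unskip_pair h i, unskip_pair h j))"
  using assms by (simp add: embed_pair_mat_def)

lemma embed_pair_mat_mult_index:
  assumes W: "W \<in> carrier_mat (2 * Suc h) m" and i: "i < 2 * Suc h" and j: "j < m"
  shows "(embed_pair_mat h Z * W) $$ (i,j) = (if i = 0 \<or> i = Suc h then W $$ (i,j)
    else (\<Sum>c<2*h. Z $$ (unskip_pair h i, c) * W $$ (skip_pair h c, j)))"
proof -
  let ?E = "embed_pair_mat h Z"
  have "(?E * W) $$ (i,j) = (\<Sum>k<2 * Suc h. ?E $$ (i,k) * W $$ (k,j))"
    using W i j by (simp add: scalar_prod_def embed_pair_mat_def atLeast0LessThan)
  also have "\<dots> = ?E $$ (i,0) * W $$ (0,j) + ?E $$ (i, Suc h) * W $$ (Suc h,j) +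
      (\<Sum>c<2*h. ?E $$ (i, skip_pair h c) * W $$ (skip_pair h c, j))"
    by (rule sum_skip_pair)
  finally show ?thesis using i by (auto simp: embed_pair_mat_index intro!: sum.cong)
qed

lemma mult_embed_pair_mat_index:
  assumes W: "W \<in> carrier_mat m (2 * Suc h)" and i: "i < m" and j: "j < 2 * Suc h"
  shows "(W * embed_pair_mat h Z) $$ (i,j) = (if j = 0 \<or> j = Suc h then W $$ (i,j)
    else (\<Sum>c<2*h. W $$ (i, skip_pair h c) * Z $$ (c, unskip_pair h j)))"
proof -
  let ?E = "embed_pair_mat h Z"
  have "(W * ?E) $$ (i,j) = (\<Sum>k<2 * Suc h. W $$ (i,k) * ?E $$ (k,j))"
    using W i j by (simp add: scalar_prod_def embed_pair_mat_def atLeast0LessThan)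
  also have "\<dots> = W $$ (i,0) * ?E $$ (0,j) + W $$ (i,Suc h) * ?E $$ (Suc h,j) +
      (\<Sum>c<2*h. W $$ (i, skip_pair h c) * ?E $$ (skip_pair h c, j))"
    by (rule sum_skip_pair)
  finally show ?thesis using j by (auto simp: embed_pair_mat_index intro!: sum.cong)
qed

lemma embed_pair_mat_mult:
  assumes Z: "Z \<in> carrier_mat (2*h) (2*h)" and Z': "Z' \<in> carrier_mat (2*h) (2*h)"
  shows "embed_pair_mat h Z * embed_pair_mat h Z' = embed_pair_mat h (Z * Z')"
proof (rule eq_matI)
  fix i j assume "i < dim_row (embed_pair_mat h (Z * Z'))" "j < dim_col (embed_pair_mat h (Z * Z'))"
  then have ij: "i < 2 * Suc h" "j < 2 * Suc h" by (auto simp: embed_pair_mat_def)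
  have "(\<Sum>c<2*h. Z $$ (unskip_pair h i, c) * embed_pair_mat h Z' $$ (skip_pair h c, j)) =
      (Z * Z') $$ (unskip_pair h i, unskip_pair h j)"
    if "i \<noteq> 0" "i \<noteq> Suc h" "j \<noteq> 0" "j \<noteq> Suc h"
    using that ij Z Z' unskip_pair_facts[OF ij(1)] unskip_pair_facts[OF ij(2)]
    by (auto simp: embed_pair_mat_index scalar_prod_def atLeast0LessThan intro!: sum.cong)
  then show "(embed_pair_mat h Z * embed_pair_mat h Z') $$ (i,j) = embed_pair_mat h (Z * Z') $$ (i,j)"
    using ij by (auto simp: embed_pair_mat_mult_index[OF embed_pair_mat_carrier ij] embed_pair_mat_index)
qed (auto simp: embed_pair_mat_def)

lemma embed_pair_mat_one: "embed_pair_mat h (1\<^sub>m (2*h)) = (1\<^sub>m (2 * Suc h) :: 'a::field mat)"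
proof (rule eq_matI)
  fix i j assume "i < dim_row (1\<^sub>m (2 * Suc h) :: 'a mat)" "j < dim_col (1\<^sub>m (2 * Suc h) :: 'a mat)"
  then have ij: "i < 2 * Suc h" "j < 2 * Suc h" by auto
  have "unskip_pair h i = unskip_pair h j \<longleftrightarrow> i = j" if "i \<noteq> 0" "i \<noteq> Suc h" "j \<noteq> 0" "j \<noteq> Suc h"
    using that unskip_pair_facts[OF ij(1)] unskip_pair_facts[OF ij(2)] by metis
  then show "embed_pair_mat h (1\<^sub>m (2*h)) $$ (i,j) = (1\<^sub>m (2 * Suc h) :: 'a mat) $$ (i,j)"
    using ij unskip_pair_facts[OF ij(1)] unskip_pair_facts[OF ij(2)] by (simp add: embed_pair_mat_index)
qed (auto simp: embed_pair_mat_def)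

lemma embed_pair_mat_is_inverse:
  assumes "is_inverse_mat (2*h) P Q"
  shows "is_inverse_mat (2 * Suc h) (embed_pair_mat h P) (embed_pair_mat h (Q :: 'a::field mat))"
  using assms embed_pair_mat_carrier[of h P] embed_pair_mat_carrier[of h Q]
  by (auto simp: is_inverse_mat_def embed_pair_mat_mult embed_pair_mat_one)

lemma col_embed_pair_mat:
  assumes i: "i < 2 * Suc h" and Z: "Z \<in> carrier_mat (2*h) (2*h)"
  shows "col (embed_pair_mat h Z) i $ 0 = (if i = 0 then 1 else 0)"
    and "col (embed_pair_mat h Z) i $ Suc h = (if i = Suc h then 1 else 0)"
    and "drop_pair_vec h (col (embed_pair_mat h Z) i) =
      (if i = 0 \<or> i = Suc h then 0\<^sub>v (2*h) else col Z (unskip_pair h i))"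
  using i Z unskip_pair_facts[OF i] embed_pair_mat_carrier[of h Z]
  by (auto simp: embed_pair_mat_index drop_pair_vec_def intro!: eq_vecI)

lemma similitude_embed_pair_mat:
  fixes Z :: "'a::field mat"
  assumes sim: "similitude h 1 Z"
  shows "similitude (Suc h) 1 (embed_pair_mat h Z)"
proof -
  let ?E = "embed_pair_mat h Z"
  have Z: "Z \<in> carrier_mat (2*h) (2*h)" using sim by (rule similitude_carrier)
  have E: "?E \<in> carrier_mat (2 * Suc h) (2 * Suc h)" by (rule embed_pair_mat_carrier)
  have "transpose_mat ?E * Jmat (Suc h) * ?E = Jmat (Suc h)"
  proof (rule eq_matI)
    fix i j assume "i < dim_row (Jmat (Suc h) :: 'a mat)" "j < dim_col (Jmat (Suc h) :: 'a mat)"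
    then have ij: "i < 2 * Suc h" "j < 2 * Suc h" by auto
    let ?zi = "if i = 0 \<or> i = Suc h then 0\<^sub>v (2*h) else col Z (unskip_pair h i)"
    let ?zj = "if j = 0 \<or> j = Suc h then 0\<^sub>v (2*h) else col Z (unskip_pair h j)"
    have ci: "col ?E i \<in> carrier_vec (2 * Suc h)" and cj: "col ?E j \<in> carrier_vec (2 * Suc h)"
      using carrier_matD[OF E] by (auto intro!: carrier_vecI)
    have "(transpose_mat ?E * Jmat (Suc h) * ?E) $$ (i,j) = sform (Suc h) (col ?E i) (col ?E j)"
      by (rule gram_Jmat_index[OF E E ij])
    also have "\<dots> = ((if i = 0 then 1 else 0) * (if j = Suc h then 1 else 0) -
        (if i = Suc h then 1 else 0) * (if j = 0 then 1 else 0)) + sform h ?zi ?zj"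
      unfolding sform_drop_pair[OF ci cj] col_embed_pair_mat[OF ij(1) Z] col_embed_pair_mat[OF ij(2) Z] ..
    also have "\<dots> = Jmat (Suc h) $$ (i,j)"
    proof (cases "i = 0 \<or> i = Suc h \<or> j = 0 \<or> j = Suc h")
      case True
      then show ?thesis using ij by (auto simp: sform_zero_left sform_zero_right Jmat_index sympl_partner_def)
    next
      case False
      note i = unskip_pair_facts[OF ij(1)] and j = unskip_pair_facts[OF ij(2)]
      have "sform h ?zi ?zj = (transpose_mat Z * Jmat h * Z) $$ (unskip_pair h i, unskip_pair h j)"
        using gram_Jmat_index[OF Z Z] i j False by simp
      also have "\<dots> = Jmat (Suc h) $$ (i,j)"
        using sim Jmat_skip_pair[OF i(2) j(2), where 'a = 'a] i(1) j(1) False by (simp add: similitude_def)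
      finally show ?thesis using False by simp
    qed
    finally show "(transpose_mat ?E * Jmat (Suc h) * ?E) $$ (i,j) = Jmat (Suc h) $$ (i,j)" .
  qed (use E in auto)
  then show ?thesis using E by (simp add: similitude_def)
qed

lemma char_poly_matrix_delete:
  assumes A: "A \<in> carrier_mat (Suc n) (Suc n)" and k: "k < Suc n"
  shows "mat_delete (char_poly_matrix A) k k = char_poly_matrix (mat_delete A k k)"
  using A k by (intro eq_matI) (auto simp: mat_delete_def char_poly_matrix_def)

lemma char_poly_expand_col:
  fixes A :: "'a::field mat"
  assumes A: "A \<in> carrier_mat (Suc n) (Suc n)" and k: "k < Suc n"
    and z: "\<And>i. i < Suc n \<Longrightarrow> i \<noteq> k \<Longrightarrow> A $$ (i,k) = 0"
  shows "char_poly A = [:- A $$ (k,k), 1:] * char_poly (mat_delete A k k)"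
proof -
  have C: "char_poly_matrix A \<in> carrier_mat (Suc n) (Suc n)" using A by simp
  have "char_poly A = (\<Sum>i<Suc n. char_poly_matrix A $$ (i,k) * cofactor (char_poly_matrix A) i k)"
    unfolding char_poly_def by (rule laplace_expansion_column[OF C k])
  also have "\<dots> = char_poly_matrix A $$ (k,k) * cofactor (char_poly_matrix A) k k"
    using z A k by (subst sum.mono_neutral_right[where S="{k}"]) (auto simp: char_poly_matrix_def)
  also have "\<dots> = [:- A $$ (k,k), 1:] * char_poly (mat_delete A k k)"
    unfolding cofactor_def char_poly_matrix_delete[OF A k] char_poly_def using A k
    by (simp add: char_poly_matrix_def)
  finally show ?thesis .
qed

lemma char_poly_expand_row:
  fixes A :: "'a::field mat"
  assumes A: "A \<in> carrier_mat (Suc n) (Suc n)" and k: "k < Suc n"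
    and z: "\<And>j. j < Suc n \<Longrightarrow> j \<noteq> k \<Longrightarrow> A $$ (k,j) = 0"
  shows "char_poly A = [:- A $$ (k,k), 1:] * char_poly (mat_delete A k k)"
proof -
  have C: "char_poly_matrix A \<in> carrier_mat (Suc n) (Suc n)" using A by simp
  have "char_poly A = (\<Sum>j<Suc n. char_poly_matrix A $$ (k,j) * cofactor (char_poly_matrix A) k j)"
    unfolding char_poly_def by (rule laplace_expansion_row[OF C k])
  also have "\<dots> = char_poly_matrix A $$ (k,k) * cofactor (char_poly_matrix A) k k"
    using z A k by (subst sum.mono_neutral_right[where S="{k}"]) (auto simp: char_poly_matrix_def)
  also have "\<dots> = [:- A $$ (k,k), 1:] * char_poly (mat_delete A k k)"
    unfolding cofactor_def char_poly_matrix_delete[OF A k] char_poly_def using A k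
    by (simp add: char_poly_matrix_def)
  finally show ?thesis .
qed

lemma drop_pair_mat_eq_mat_delete:
  assumes V: "V \<in> carrier_mat (2 * Suc h) (2 * Suc h)"
  shows "mat_delete (mat_delete V 0 0) h h = drop_pair_mat h V"
  using V by (intro eq_matI) (auto simp: mat_delete_def drop_pair_mat_def skip_pair_def)

lemma similitude_first_column_eigen:
  fixes M :: "'a::field mat"
  assumes sim: "similitude (Suc h) \<mu> M" and \<mu>: "\<mu> \<noteq> 0"
    and col0: "\<And>i. i < 2 * Suc h \<Longrightarrow> M $$ (i,0) = (if i = 0 then e else 0)"
  shows "\<And>j. j < 2 * Suc h \<Longrightarrow> j \<noteq> Suc h \<Longrightarrow> M $$ (Suc h, j) = 0"
    and "similitude h \<mu> (drop_pair_mat h M)"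
proof -
  let ?e1 = "unit_vec (2 * Suc h) 0 :: 'a vec"
  have M: "M \<in> carrier_mat (2 * Suc h) (2 * Suc h)" using sim by (rule similitude_carrier)
  have c0: "col M 0 = e \<cdot>\<^sub>v ?e1" using M col0 by (intro eq_vecI) auto
  have row: "e * M $$ (Suc h, j) = (if j = Suc h then \<mu> else 0)" if j: "j < 2 * Suc h" for j
  proof -
    have "e * M $$ (Suc h, j) = sform (Suc h) (col M 0) (col M j)"
      using M j sform_unit_vec_0_left[of "col M j" "Suc h"] by (simp add: c0 sform_smult_left)
    also have "\<dots> = (\<mu> \<cdot>\<^sub>m Jmat (Suc h)) $$ (0, j)"
      using sim M j gram_Jmat_index[OF M M, of 0 j] by (simp add: similitude_def)
    finally show ?thesis using j by (simp add: Jmat_index sympl_partner_def)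
  qed
  have "e * M $$ (Suc h, Suc h) = \<mu>" using row[of "Suc h"] by simp
  then have "e \<noteq> 0" using \<mu> by auto
  then show row0: "M $$ (Suc h, j) = 0" if "j < 2 * Suc h" "j \<noteq> Suc h" for j
    using row[OF that(1)] that by simp
  show "similitude h \<mu> (drop_pair_mat h M)"
    using row0 by (intro similitude_drop_pair_mat[OF sim]) auto
qed

text \<open>Here M e_1 = e e_1 and M stabilises the symplectic orthogonal of e_1, the span of all basis
  vectors but f_1.\<close>
context
  fixes h :: nat and e :: "'a::field" and M :: "'a mat"
  assumes M: "M \<in> carrier_mat (2 * Suc h) (2 * Suc h)"
    and col0: "\<And>i. i < 2 * Suc h \<Longrightarrow> M $$ (i,0) = (if i = 0 then e else 0)"
    and row: "\<And>j. j < 2 * Suc h \<Longrightarrow> j \<noteq> Suc h \<Longrightarrow> M $$ (Suc h, j) = 0"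
begin

lemma char_poly_drop_pair:
  shows "char_poly M = [:- e, 1:] * ([:- M $$ (Suc h, Suc h), 1:] * char_poly (drop_pair_mat h M))"
proof -
  have M': "M \<in> carrier_mat (Suc (Suc (2*h))) (Suc (Suc (2*h)))" using M by simp
  have "char_poly M = [:- M $$ (0,0), 1:] * char_poly (mat_delete M 0 0)"
    using col0 by (intro char_poly_expand_col[OF M']) auto
  also have "char_poly (mat_delete M 0 0) =
      [:- mat_delete M 0 0 $$ (h,h), 1:] * char_poly (mat_delete (mat_delete M 0 0) h h)"
    using M row[of "Suc j" for j] by (intro char_poly_expand_row) (auto simp: mat_delete_def)
  also have "mat_delete M 0 0 $$ (h,h) = M $$ (Suc h, Suc h)" using M by (simp add: mat_delete_def)
  finally show ?thesis using col0[of 0] by (simp add: drop_pair_mat_eq_mat_delete[OF M])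
qed

lemma embed_pair_conj_index:
  assumes P1: "P1 \<in> carrier_mat (2*h) (2*h)" and Q1: "Q1 \<in> carrier_mat (2*h) (2*h)"
  defines "R \<equiv> embed_pair_mat h Q1 * M * embed_pair_mat h P1"
  shows "R \<in> carrier_mat (2 * Suc h) (2 * Suc h)"
    and "\<And>i. i < 2 * Suc h \<Longrightarrow> i \<noteq> 0 \<Longrightarrow> R $$ (i,0) = 0"
    and "\<And>j. j < 2 * Suc h \<Longrightarrow> j \<noteq> Suc h \<Longrightarrow> R $$ (Suc h, j) = 0"
    and "\<And>a b. a < 2*h \<Longrightarrow> b < 2*h \<Longrightarrow>
      R $$ (skip_pair h a, skip_pair h b) = (Q1 * drop_pair_mat h M * P1) $$ (a,b)"
proof -
  let ?n = "2 * Suc h"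
  define L where "L = embed_pair_mat h Q1 * M"
  have Lc: "L \<in> carrier_mat ?n ?n" unfolding L_def using embed_pair_mat_carrier M by (rule mult_carrier_mat)
  then show "R \<in> carrier_mat ?n ?n" using embed_pair_mat_carrier[of h P1]
    by (simp add: R_def L_def[symmetric])
  have L: "L $$ (i,j) = (if i = 0 \<or> i = Suc h then M $$ (i,j)
      else (\<Sum>c<2*h. Q1 $$ (unskip_pair h i, c) * M $$ (skip_pair h c, j)))"
    if "i < ?n" "j < ?n" for i j unfolding L_def by (rule embed_pair_mat_mult_index[OF M that])
  have R: "R $$ (i,j) = (if j = 0 \<or> j = Suc h then L $$ (i,j)
      else (\<Sum>d<2*h. L $$ (i, skip_pair h d) * P1 $$ (d, unskip_pair h j)))"
    if "i < ?n" "j < ?n" for i j unfolding R_def L_def[symmetric]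
      by (rule mult_embed_pair_mat_index[OF Lc that])
  show "R $$ (i,0) = 0" if "i < ?n" "i \<noteq> 0" for i
    using that by (simp add: R L col0)
  show "R $$ (Suc h, j) = 0" if "j < ?n" "j \<noteq> Suc h" for j
    using that by (simp add: R L row)
  show "R $$ (skip_pair h a, skip_pair h b) = (Q1 * drop_pair_mat h M * P1) $$ (a,b)"
    if ab: "a < 2*h" "b < 2*h" for a b
  proof -
    have "R $$ (skip_pair h a, skip_pair h b) =
        (\<Sum>d<2*h. (\<Sum>c<2*h. Q1 $$ (a, c) * drop_pair_mat h M $$ (c, d)) * P1 $$ (d, b))"
      using ab by (auto simp: R L drop_pair_mat_def intro!: sum.cong)
    also have "\<dots> = (Q1 * drop_pair_mat h M * P1) $$ (a,b)"
      using conj_index[OF Q1 drop_pair_mat_carrier P1 ab] by (simp add: sum_distrib_right atLeast0LessThan)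
    finally show ?thesis .
  qed
qed

lemma embed_pair_conj_triangular:
  assumes P1: "P1 \<in> carrier_mat (2*h) (2*h)" and Q1: "Q1 \<in> carrier_mat (2*h) (2*h)"
    and tri: "triangular_wrt (borel_rank h) (Q1 * drop_pair_mat h M * P1)"
  shows "triangular_wrt (borel_rank (Suc h)) (embed_pair_mat h Q1 * M * embed_pair_mat h P1)"
proof -
  note R = embed_pair_conj_index[OF P1 Q1]
  have "(embed_pair_mat h Q1 * M * embed_pair_mat h P1) $$ (i,j) = 0"
    if ij: "i < 2 * Suc h" "j < 2 * Suc h" and r: "borel_rank (Suc h) j < borel_rank (Suc h) i" for i j
  proof -
    have "i \<noteq> 0" "j \<noteq> Suc h" using ij r by (auto simp: borel_rank_def split: if_splits)
    consider "j = 0" | "i = Suc h" | "j \<noteq> 0" "i \<noteq> Suc h" by blast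
    then show ?thesis
    proof cases
      case 3
      note i = unskip_pair_facts[OF ij(1) \<open>i \<noteq> 0\<close> 3(2)]
        and j = unskip_pair_facts[OF ij(2) 3(1) \<open>j \<noteq> Suc h\<close>]
      have "borel_rank h (unskip_pair h j) < borel_rank h (unskip_pair h i)"
        using r i j borel_rank_skip_pair[of "unskip_pair h i" h] borel_rank_skip_pair[of "unskip_pair h j" h]
        by simp
      then have "(Q1 * drop_pair_mat h M * P1) $$ (unskip_pair h i, unskip_pair h j) = 0"
        using i(2) j(2) P1 Q1 by (intro triangular_wrtD[OF tri]) auto
      then show ?thesis using R(4)[OF i(2) j(2)] i(1) j(1) by simp
    qed (use R(2,3) ij \<open>i \<noteq> 0\<close> \<open>j \<noteq> Suc h\<close> in auto)
  qed
  then show ?thesis using carrier_matD[OF R(1)] unfolding triangular_wrt_def by metis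
qed

end

section \<open>Triangularization\<close>

lemma Sp_conj_eigen_first_column:
  fixes M :: "'a::field mat"
  assumes M: "M \<in> carrier_mat (2*g) (2*g)" and g: "g \<ge> 1" and root: "poly (char_poly M) e = 0"
  shows "\<exists>T T'. similitude g 1 T \<and> is_inverse_mat (2*g) T T' \<and>
    (\<forall>i < 2*g. (T' * M * T) $$ (i,0) = (if i = 0 then e else 0))"
proof -
  let ?e0 = "unit_vec (2*g) 0 :: 'a vec"
  obtain v where v: "v \<in> carrier_vec (2*g)" "v \<noteq> 0\<^sub>v (2*g)" "M *\<^sub>v v = e \<cdot>\<^sub>v v"
    using eigenvalue_root_char_poly[OF M] root M by (auto simp: eigenvalue_def eigenvector_def)
  have "?e0 $ 0 \<noteq> 0\<^sub>v (2*g) $ 0" using g by simp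
  then have e0: "?e0 \<in> carrier_vec (2*g)" "?e0 \<noteq> 0\<^sub>v (2*g)" by auto
  obtain T where T: "similitude g 1 T" "T *\<^sub>v ?e0 = v" using Sp_transitive[OF e0 v(1,2)] by blast
  obtain T' where inv: "is_inverse_mat (2*g) T T'" using similitude_is_inverse_mat[OF T(1)] by auto
  have Tc: "T \<in> carrier_mat (2*g) (2*g)" and T'c: "T' \<in> carrier_mat (2*g) (2*g)"
    and T'T: "T' * T = 1\<^sub>m (2*g)" using inv by (auto simp: is_inverse_mat_def)
  have "T' *\<^sub>v v = (T' * T) *\<^sub>v ?e0"
    using Tc T'c by (simp add: T(2)[symmetric] assoc_mult_mat_vec[of _ "2*g" "2*g"])
  then have T'v: "T' *\<^sub>v v = ?e0" by (simp add: T'T)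
  have "(T' * M * T) *\<^sub>v ?e0 = (T' * M) *\<^sub>v (T *\<^sub>v ?e0)"
    using Tc T'c M by (intro assoc_mult_mat_vec) auto
  also have "\<dots> = T' *\<^sub>v (M *\<^sub>v (T *\<^sub>v ?e0))"
    using Tc T'c M by (intro assoc_mult_mat_vec) auto
  also have "\<dots> = e \<cdot>\<^sub>v ?e0"
    using T'c v by (simp add: T(2) v(3) mult_mat_vec T'v)
  finally have eigen: "(T' * M * T) *\<^sub>v ?e0 = e \<cdot>\<^sub>v ?e0" .
  have "(T' * M * T) $$ (i,0) = (if i = 0 then e else 0)" if "i < 2*g" for i
  proof -
    have "((T' * M * T) *\<^sub>v ?e0) $ i = (e \<cdot>\<^sub>v ?e0) $ i" by (simp only: eigen)
    then show ?thesis using that Tc T'c M by auto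
  qed
  then show ?thesis using T(1) inv by blast
qed

definition roots_in_base_field :: "'a::field poly \<Rightarrow> bool" where
  "roots_in_base_field p \<longleftrightarrow> (\<forall>x. poly (map_poly to_ac p) x = 0 \<longrightarrow> x \<in> range to_ac)"

lemma roots_in_base_field_mult_right: "roots_in_base_field (p * q) \<Longrightarrow> roots_in_base_field q"
  by (simp add: roots_in_base_field_def to_ac_poly.hom_mult)

lemma roots_in_base_field_has_root:
  assumes "roots_in_base_field p" "Polynomial.degree p > 0"
  shows "\<exists>e. poly p e = 0"
proof -
  obtain x where x: "poly (map_poly (to_ac :: 'a \<Rightarrow> 'a alg_closure) p) x = 0"
    using alg_closed_imp_poly_has_root[of "map_poly to_ac p"] assms(2) by auto
  then obtain e where "x = to_ac e" using assms(1) by (auto simp: roots_in_base_field_def)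
  then have "to_ac (poly p e) = (0 :: 'a alg_closure)" using x by simp
  then show ?thesis by auto
qed

lemma Sp_triangularization:
  fixes M :: "'a::field mat"
  assumes "similitude g \<mu> M" "\<mu> \<noteq> 0" "roots_in_base_field (char_poly M)"
  shows "\<exists>P Q. similitude g 1 P \<and> is_inverse_mat (2*g) P Q \<and> triangular_wrt (borel_rank g) (Q * M * P)"
  using assms
proof (induction g arbitrary: M)
  case 0
  have "similitude 0 1 (1\<^sub>m 0 :: 'a mat)" by (rule similitude_one_mat[of 0, simplified])
  moreover have "is_inverse_mat (2*0) (1\<^sub>m 0) (1\<^sub>m 0 :: 'a mat)" by (simp add: is_inverse_mat_def)
  moreover have "triangular_wrt (borel_rank 0) (1\<^sub>m 0 * M * 1\<^sub>m 0)" by (simp add: triangular_wrt_def)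
  ultimately show ?case by blast
next
  case (Suc h M)
  let ?n = "2 * Suc h" and ?m = "Suc (Suc (2*h))"
  have M: "M \<in> carrier_mat ?n ?n" using Suc.prems(1) by (rule similitude_carrier)
  obtain e where e: "poly (char_poly M) e = 0"
    using roots_in_base_field_has_root[OF Suc.prems(3)] degree_monic_char_poly[OF M] by auto
  obtain T T' where T: "similitude (Suc h) 1 T" and inv: "is_inverse_mat ?n T T'"
    and col0: "\<And>i. i < ?n \<Longrightarrow> (T' * M * T) $$ (i,0) = (if i = 0 then e else 0)"
    using Sp_conj_eigen_first_column[OF M _ e] by auto
  define M' where "M' = T' * M * T"
  have M': "M' \<in> carrier_mat ?n ?n" using inv M by (auto simp: M'_def is_inverse_mat_def)
  have sim': "similitude (Suc h) \<mu> M'"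
    unfolding M'_def using similitude_inverse[OF T _ inv] is_inverse_mat_sym[OF inv] Suc.prems(1)
    by (intro similitude_conj[of _ 1]) auto
  note row = similitude_first_column_eigen(1)[OF sim' Suc.prems(2) col0[folded M'_def]]
  have "char_poly M' = char_poly M"
    unfolding M'_def by (rule char_poly_conj[OF is_inverse_mat_sym[OF inv] M])
  then have "roots_in_base_field (char_poly (drop_pair_mat h M'))"
    using Suc.prems(3) char_poly_drop_pair[OF M' col0[folded M'_def] row]
    by (metis roots_in_base_field_mult_right)
  moreover note similitude_first_column_eigen(2)[OF sim' Suc.prems(2) col0[folded M'_def]]
  ultimately obtain P1 Q1 where P1: "similitude h 1 P1" and inv1: "is_inverse_mat (2*h) P1 Q1"
    and tri: "triangular_wrt (borel_rank h) (Q1 * drop_pair_mat h M' * P1)"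
    using Suc.IH Suc.prems(2) by blast
  have P1c: "P1 \<in> carrier_mat (2*h) (2*h)" and Q1c: "Q1 \<in> carrier_mat (2*h) (2*h)"
    using inv1 by (auto simp: is_inverse_mat_def)
  have "similitude (Suc h) 1 (T * embed_pair_mat h P1)"
    using similitude_mult[OF T similitude_embed_pair_mat[OF P1]] by simp
  moreover have "is_inverse_mat ?n (T * embed_pair_mat h P1) (embed_pair_mat h Q1 * T')"
    by (rule is_inverse_mat_mult[OF inv embed_pair_mat_is_inverse[OF inv1]])
  moreover have "embed_pair_mat h Q1 * T' * M * (T * embed_pair_mat h P1) =
      embed_pair_mat h Q1 * M' * embed_pair_mat h P1"
    using inv[unfolded is_inverse_mat_def] M embed_pair_mat_carrier[of h P1] embed_pair_mat_carrier[of h Q1]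
    by (auto simp: M'_def assoc_mult_mat[of _ ?m ?m _ ?m _ ?m])
  ultimately show ?case
    using embed_pair_conj_triangular[OF M' col0[folded M'_def] row P1c Q1c tri] by metis
qed

lemma eigen_split_roots_in_base_field:
  assumes "eigen_split g (M :: 'a::field mat)"
  shows "roots_in_base_field (char_poly M)"
  unfolding roots_in_base_field_def
proof (intro allI impI)
  obtain lam :: "nat \<Rightarrow> 'a alg_closure" where
    cp: "map_poly to_ac (char_poly M) =
      (\<Prod>i<g. [:- lam i, 1:] * [:- (to_ac (multiplicator g M) * inverse (lam i)), 1:])"
    and lam: "\<And>i. i < g \<Longrightarrow> lam i \<in> to_ac ` (UNIV - {0})"
    using assms unfolding eigen_split_def by blast
  fix x assume "poly (map_poly to_ac (char_poly M)) x = 0"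
  then obtain i where i: "i < g"
    and "poly [:- lam i, 1:] x * poly [:- (to_ac (multiplicator g M) * inverse (lam i)), 1:] x = 0"
    by (auto simp only: cp poly_prod prod_zero_iff poly_mult finite_lessThan lessThan_iff)
  then have "x = lam i \<or> x = to_ac (multiplicator g M) * inverse (lam i)" by auto
  moreover obtain l where "lam i = to_ac l" using lam[OF i] by blast
  ultimately have "x = to_ac l \<or> x = to_ac (multiplicator g M * inverse l)" by auto
  then show "x \<in> range to_ac" by blast
qed

lemma GSp_conj_into_B2g:
  assumes M: "M \<in> GSp g" and es: "eigen_split g (M :: 'a::field mat)"
  shows "\<exists>P \<in> GSp g. \<exists>Q. is_inverse_mat (2*g) P Q \<and> P * M * Q \<in> B2g g"
proof -
  obtain \<mu> where \<mu>: "\<mu> \<noteq> 0" "similitude g \<mu> M" using M unfolding GSp_iff by blast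
  obtain P Q where P: "similitude g 1 P" and inv: "is_inverse_mat (2*g) P Q"
    and tri: "triangular_wrt (borel_rank g) (Q * M * P)"
    using Sp_triangularization[OF \<mu>(2,1) eigen_split_roots_in_base_field[OF es]] by blast
  have Q: "similitude g 1 Q" using similitude_inverse[OF P _ inv] by simp
  have "similitude g \<mu> (Q * M * P)"
    using similitude_conj[OF Q _ is_inverse_mat_sym[OF inv] \<mu>(2)] by simp
  then have "Q * M * P \<in> B2g g" using similitude_triangular_imp_B2g[OF \<mu>(1) _ tri] by blast
  moreover have "Q \<in> GSp g" using Q GSp_iff[of Q g] one_neq_zero by blast
  ultimately show ?thesis using is_inverse_mat_sym[OF inv] by blast
qed

theorem proposition12:
  fixes g :: nat and t :: int and z :: real
  assumes "g \<ge> 1"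
    and "Factorial_Ring.prime (card (UNIV :: 'a set))"
    and "\<not> card (UNIV :: 'a set) dvd 2 * g"
    and "z > 0"
  shows
    "(Css g t \<noteq> ({} :: 'a::{finite, field} mat set) \<and> Css_le g z \<noteq> ({} :: 'a mat set) \<and>
      conj_stable g (GSp g) (Css g t :: 'a mat set) \<and> conj_stable g (GSp g) (Css_le g z :: 'a mat set))
   \<and> (CB g t \<noteq> ({} :: 'a mat set) \<and> CB_le g z \<noteq> ({} :: 'a mat set) \<and>
      conj_stable g (B2g g) (CB g t :: 'a mat set) \<and> conj_stable g (B2g g) (CB_le g z :: 'a mat set))
   \<and> (\<forall>M \<in> (Css g t \<union> Css_le g z :: 'a mat set). \<exists>P \<in> GSp g. \<exists>Q.
        is_inverse_mat (2*g) P Q \<and> P * M * Q \<in> B2g g)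
   \<and> (\<forall>U \<in> (U2g g :: 'a mat set). \<forall>M \<in> CB g t. U * M \<in> CB g t)
   \<and> (\<forall>U \<in> (U'2g g :: 'a mat set). \<forall>M \<in> CB g 0. U * M \<in> CB g 0)
   \<and> (\<forall>U \<in> (U2g g :: 'a mat set). \<forall>M \<in> CB_le g z. U * M \<in> CB_le g z)"
proof -
  note g = assms(1)
  have t0: "(0::int) \<in> {t. \<bar>real_of_int t\<bar> \<le> z}" using assms(4) by simp
  obtain D D0 :: "'a mat" where "D \<in> Css g t" "D \<in> CB g t" "D0 \<in> Css g 0" "D0 \<in> CB g 0"
    using Css_CB_common_element[OF assms(1-3)] by metis
  then have nonempty: "Css g t \<noteq> ({} :: 'a mat set)" "Css_le g z \<noteq> ({} :: 'a mat set)"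
      "CB g t \<noteq> ({} :: 'a mat set)" "CB_le g z \<noteq> ({} :: 'a mat set)"
    using t0 unfolding Css_le_def CB_le_eq_UN by blast+
  have stable: "conj_stable g (GSp g) (Css_le g z :: 'a mat set)"
      "conj_stable g (B2g g) (CB_le g z :: 'a mat set)"
    unfolding Css_le_def CB_le_eq_UN by (intro conj_stable_UN conj_stable_Css conj_stable_CB g)+
  have "\<exists>P \<in> GSp g. \<exists>Q. is_inverse_mat (2*g) P Q \<and> P * M * Q \<in> B2g g"
    if "M \<in> Css g t \<union> Css_le g z" for M :: "'a mat"
    using that GSp_conj_into_B2g unfolding Css_le_def Css_def Cset_def by blast
  moreover have "U * M \<in> CB_le g z" if "U \<in> U2g g" "M \<in> CB_le g z" for U M :: "'a mat"
    using that U2g_mult_CB[OF g] unfolding CB_le_eq_UN by blast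
  ultimately show ?thesis
    using nonempty stable conj_stable_Css[OF g] conj_stable_CB[OF g] U2g_mult_CB[OF g] U'2g_mult_CB_0[OF g]
    by blast
qed

end
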